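(* Let $X\subseteq\{0,1\}^n$ and let $f:X\rightarrow\{0,1\}$ be any (partial or total) Boolean function. Then $$UQ(f)=\left\lceil \frac{UC(f)}{2}\right\rceil=\left\lceil \frac{udeg(f)}{2}\right\rceil .$$
   Context: Query model: the input $x\in X$ is accessible only through queries. A classical randomized query algorithm adaptively queries bits $x_i$ (each query costs one) and outputs a bit. A quantum query algorithm starts in a fixed state, alternates input-independent unitaries with applications of the oracle $O_x:|i,b,z\rangle\mapsto|i,b\oplus x_i,z\rangle$, and ends with a measurement giving an output bit; its cost is the number of oracle applications. $UQ(f)$ (resp. $UC(f)$) is the minimum number of queries of a quantum (resp. classical randomized) algorithm that, for every $x\in X$, outputs $f(x)$ with probability strictly greater than $1/2$. A real multilinear polynomial $q:\{0,1\}^n\rightarrow[0,1]$ is an unbounded error polynomial for $f$ if $q(x)>1/2$ whenever $x\in X$ and $f(x)=1$, and $q(x)<1/2$ whenever $x\in X$ and $f(x)=0$; $udeg(f)$ is the minimum degree of such a polynomial. *)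

theory Defs
  imports "HOL-Probability.Probability_Mass_Function" "Jordan_Normal_Form.Matrix"
begin

text \<open>A partial Boolean function f : X -> {0,1} is a predicate on lists together with
  its domain X (a subset of the cube); only the values on X matter.\<close>

definition cube :: "nat \<Rightarrow> bool list set" where
  "cube n = {x. length x = n}"

definition bit :: "bool \<Rightarrow> real" where
  "bit b = (if b then 1 else 0)"

definition mpoly_eval :: "nat \<Rightarrow> (nat set \<Rightarrow> real) \<Rightarrow> bool list \<Rightarrow> real" where
  "mpoly_eval n c x = (\<Sum>S\<in>Pow {0..<n}. c S * (\<Prod>i\<in>S. bit (x ! i)))"

definition mpoly_deg_le :: "nat \<Rightarrow> (nat set \<Rightarrow> real) \<Rightarrow> nat \<Rightarrow> bool" where
  "mpoly_deg_le n c d \<longleftrightarrow> (\<forall>S\<in>Pow {0..<n}. c S \<noteq> 0 \<longrightarrow> card S \<le> d)"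

definition unbounded_poly :: "nat \<Rightarrow> bool list set \<Rightarrow> (bool list \<Rightarrow> bool) \<Rightarrow> (nat set \<Rightarrow> real) \<Rightarrow> bool" where
  "unbounded_poly n X f c \<longleftrightarrow>
     (\<forall>x\<in>cube n. 0 \<le> mpoly_eval n c x \<and> mpoly_eval n c x \<le> 1) \<and>
     (\<forall>x\<in>X. (f x \<longrightarrow> mpoly_eval n c x > 1/2) \<and> (\<not> f x \<longrightarrow> mpoly_eval n c x < 1/2))"

definition udeg :: "nat \<Rightarrow> bool list set \<Rightarrow> (bool list \<Rightarrow> bool) \<Rightarrow> nat" where
  "udeg n X f = (LEAST d. \<exists>c. unbounded_poly n X f c \<and> mpoly_deg_le n c d)"

text \<open>Deterministic decision trees: Query i t0 t1 queries bit x_i and continues with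
  t0 if x_i = 0, with t1 if x_i = 1. A randomized query algorithm is a probability
  distribution over deterministic decision trees; its cost is the maximal number of
  queries made on any run, i.e. the maximal depth of a tree in its support.\<close>

datatype dtree = Leaf bool | Query nat dtree dtree

fun dt_eval :: "dtree \<Rightarrow> bool list \<Rightarrow> bool" where
  "dt_eval (Leaf b) x = b"
| "dt_eval (Query i t0 t1) x = (if x ! i then dt_eval t1 x else dt_eval t0 x)"

fun dt_depth :: "dtree \<Rightarrow> nat" where
  "dt_depth (Leaf b) = 0"
| "dt_depth (Query i t0 t1) = Suc (max (dt_depth t0) (dt_depth t1))"

fun dt_valid :: "nat \<Rightarrow> dtree \<Rightarrow> bool" where
  "dt_valid n (Leaf b) = True"
| "dt_valid n (Query i t0 t1) = (i < n \<and> dt_valid n t0 \<and> dt_valid n t1)"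

definition rand_alg_computes ::
  "nat \<Rightarrow> bool list set \<Rightarrow> (bool list \<Rightarrow> bool) \<Rightarrow> nat \<Rightarrow> dtree pmf \<Rightarrow> bool" where
  "rand_alg_computes n X f k P \<longleftrightarrow>
     (\<forall>t\<in>set_pmf P. dt_valid n t \<and> dt_depth t \<le> k) \<and>
     (\<forall>x\<in>X. measure_pmf.prob P {t. dt_eval t x = f x} > 1/2)"

definition UC :: "nat \<Rightarrow> bool list set \<Rightarrow> (bool list \<Rightarrow> bool) \<Rightarrow> nat" where
  "UC n X f = (LEAST k. \<exists>P. rand_alg_computes n X f k P)"

text \<open>State space: basis states |i,b,z> with i < n, b in {0,1}, z < m (workspace of
  dimension m >= 1), encoded as the index (2*i + b)*m + z in {0..<2*n*m}.\<close>

definition qdim :: "nat \<Rightarrow> nat \<Rightarrow> nat" where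
  "qdim n m = 2 * n * m"

definition qidx :: "nat \<Rightarrow> nat \<Rightarrow> bool \<Rightarrow> nat \<Rightarrow> nat" where
  "qidx m i b z = (2 * i + (if b then 1 else 0)) * m + z"

text \<open>The query_op O_x : |i,b,z> -> |i, b xor x_i, z>, as a permutation matrix.\<close>

definition query_op :: "nat \<Rightarrow> nat \<Rightarrow> bool list \<Rightarrow> complex mat" where
  "query_op n m x = mat (qdim n m) (qdim n m) (\<lambda>(r, c).
     if (\<exists>i<n. \<exists>b z. z < m \<and> c = qidx m i b z \<and> r = qidx m i (b \<noteq> x ! i) z) then 1 else 0)"

definition adjoint :: "complex mat \<Rightarrow> complex mat" where
  "adjoint U = mat (dim_col U) (dim_row U) (\<lambda>(i, j). cnj (U $$ (j, i)))"

definition unitary :: "nat \<Rightarrow> complex mat \<Rightarrow> bool" where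
  "unitary d U \<longleftrightarrow> U \<in> carrier_mat d d \<and> adjoint U * U = 1\<^sub>m d"

text \<open>Final state U_T O_x U_{T-1} ... O_x U_0 |0>, for unitaries Us = [U_0, ..., U_T].\<close>

fun qrun :: "complex mat \<Rightarrow> complex mat list \<Rightarrow> complex vec \<Rightarrow> complex vec" where
  "qrun Ox [] v = v"
| "qrun Ox [U] v = U *\<^sub>v v"
| "qrun Ox (U # V # Us) v = qrun Ox (V # Us) (Ox *\<^sub>v (U *\<^sub>v v))"

text \<open>Final measurement: measure in the computational basis and output 1 iff the
  outcome lies in the set Acc (a general projective measurement can be reduced to
  this by absorbing a basis change into U_T).\<close>

definition accept_prob :: "nat \<Rightarrow> nat \<Rightarrow> bool list \<Rightarrow> complex mat list \<Rightarrow> nat set \<Rightarrow> real" where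
  "accept_prob n m x Us Acc =
     (let \<psi> = qrun (query_op n m x) Us (unit_vec (qdim n m) 0)
      in \<Sum>j\<in>Acc \<inter> {0..<qdim n m}. (cmod (\<psi> $ j))\<^sup>2)"

definition quantum_alg_computes ::
  "nat \<Rightarrow> bool list set \<Rightarrow> (bool list \<Rightarrow> bool) \<Rightarrow> nat \<Rightarrow> nat \<Rightarrow> complex mat list \<Rightarrow> nat set \<Rightarrow> bool" where
  "quantum_alg_computes n X f T m Us Acc \<longleftrightarrow>
     m \<ge> 1 \<and> length Us = T + 1 \<and> (\<forall>U\<in>set Us. unitary (qdim n m) U) \<and>
     (\<forall>x\<in>X. (f x \<longrightarrow> accept_prob n m x Us Acc > 1/2) \<and>
             (\<not> f x \<longrightarrow> 1 - accept_prob n m x Us Acc > 1/2))"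

definition UQ :: "nat \<Rightarrow> bool list set \<Rightarrow> (bool list \<Rightarrow> bool) \<Rightarrow> nat" where
  "UQ n X f = (LEAST T. \<exists>m Us Acc. quantum_alg_computes n X f T m Us Acc)"

end

theory Submission
  imports Defs
begin

no_notation Finite_Cartesian_Product.vec_nth (infixl "$" 90)

text \<open>
  A randomized decision tree of depth \<open>k\<close> accepts with a probability that is a polynomial of
  degree \<open>k\<close>, and the amplitudes of a \<open>T\<close>-query quantum algorithm are polynomials of degree
  \<open>T\<close>, so its acceptance probability has degree \<open>2T\<close>: hence \<open>udeg \<le> UC\<close> and \<open>udeg \<le> 2 UQ\<close>.

  Conversely, let \<open>q\<close> be an unbounded-error polynomial and write \<open>q - 1/2 = \<Sum>\<^sub>S a\<^sub>S m\<^sub>S\<close>.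
  Sampling \<open>S\<close> with probability \<open>|a\<^sub>S| / \<Sum>|a|\<close>, querying the variables of \<open>S\<close> and
  outputting \<open>sgn a\<^sub>S\<close> if the monomial \<open>m\<^sub>S\<close> is 1 and a fair coin otherwise accepts with
  probability \<open>1/2 + (q - 1/2) / (2 \<Sum>|a|)\<close>, so \<open>UC \<le> udeg\<close>. Quantumly, expand \<open>q - 1/2\<close> in
  the Fourier basis of parities instead and split every \<open>S\<close> of size \<open>\<le> 2k\<close> into two halves
  of size \<open>\<le> k\<close>; computing the parities of all halves in superposition takes \<open>k\<close> phase
  queries, and interfering the two halves of each \<open>S\<close> produces \<open>a\<^sub>S parity\<^sub>S\<close> in the acceptance
  probability, which is again \<open>1/2 + (q - 1/2) / (2 \<Sum>|a|)\<close>. So \<open>UQ \<le> \<lceil>udeg / 2\<rceil>\<close>.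
\<close>

section \<open>Polynomials of bounded degree on the cube\<close>

definition cube_poly :: "nat \<Rightarrow> nat \<Rightarrow> (bool list \<Rightarrow> real) \<Rightarrow> bool" where
  "cube_poly n d g \<longleftrightarrow> (\<exists>c. mpoly_deg_le n c d \<and> (\<forall>x\<in>cube n. g x = mpoly_eval n c x))"

lemma prod_bit_eq_indicator:
  "finite S \<Longrightarrow> (\<Prod>i\<in>S. bit (x ! i)) = bit (\<forall>i\<in>S. x ! i)"
  by (induction S rule: finite_induct) (auto simp: bit_def)

lemma prod_bit_Un:
  "finite S \<Longrightarrow> finite T \<Longrightarrow>
   (\<Prod>i\<in>S \<union> T. bit (x ! i)) = (\<Prod>i\<in>S. bit (x ! i)) * (\<Prod>i\<in>T. bit (x ! i))"
  by (simp add: prod_bit_eq_indicator) (auto simp: bit_def)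

lemma mpoly_eval_single:
  "S0 \<in> Pow {0..<n} \<Longrightarrow> mpoly_eval n (\<lambda>S. if S = S0 then a else 0) x = a * (\<Prod>i\<in>S0. bit (x ! i))"
  unfolding mpoly_eval_def by (simp add: if_distrib[of "\<lambda>y. y * _"] cong: if_cong)

lemma cube_poly_cong: "cube_poly n d g \<Longrightarrow> (\<And>x. x \<in> cube n \<Longrightarrow> g x = h x) \<Longrightarrow> cube_poly n d h"
  unfolding cube_poly_def by metis

lemma cube_poly_mono: "cube_poly n d g \<Longrightarrow> d \<le> e \<Longrightarrow> cube_poly n e g"
  unfolding cube_poly_def mpoly_deg_le_def by (meson order_trans)

lemma cube_poly_const: "cube_poly n 0 (\<lambda>x. a)"
  unfolding cube_poly_def
  by (rule exI[of _ "\<lambda>S. if S = {} then a else 0"]) (auto simp: mpoly_deg_le_def mpoly_eval_single)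

lemma cube_poly_bit: "i < n \<Longrightarrow> cube_poly n 1 (\<lambda>x. bit (x ! i))"
  unfolding cube_poly_def
  by (rule exI[of _ "\<lambda>S. if S = {i} then 1 else 0"]) (auto simp: mpoly_deg_le_def mpoly_eval_single)

lemma cube_poly_add: "cube_poly n d g \<Longrightarrow> cube_poly n d h \<Longrightarrow> cube_poly n d (\<lambda>x. g x + h x)"
  unfolding cube_poly_def
proof (elim exE conjE)
  fix c1 c2 assume c1: "mpoly_deg_le n c1 d" "\<forall>x\<in>cube n. g x = mpoly_eval n c1 x"
    and c2: "mpoly_deg_le n c2 d" "\<forall>x\<in>cube n. h x = mpoly_eval n c2 x"
  show "\<exists>c. mpoly_deg_le n c d \<and> (\<forall>x\<in>cube n. g x + h x = mpoly_eval n c x)"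
  proof (intro exI[of _ "\<lambda>S. c1 S + c2 S"] conjI ballI)
    show "mpoly_deg_le n (\<lambda>S. c1 S + c2 S) d"
      using c1(1) c2(1) unfolding mpoly_deg_le_def by (metis add.right_neutral add_0)
  qed (use c1(2) c2(2) in \<open>simp add: mpoly_eval_def distrib_right sum.distrib\<close>)
qed

lemma cube_poly_scale: "cube_poly n d g \<Longrightarrow> cube_poly n d (\<lambda>x. a * g x)"
  unfolding cube_poly_def
proof (elim exE conjE)
  fix c assume c: "mpoly_deg_le n c d" "\<forall>x\<in>cube n. g x = mpoly_eval n c x"
  show "\<exists>c'. mpoly_deg_le n c' d \<and> (\<forall>x\<in>cube n. a * g x = mpoly_eval n c' x)"
  proof (intro exI[of _ "\<lambda>S. a * c S"] conjI ballI)
    show "mpoly_deg_le n (\<lambda>S. a * c S) d"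
      using c(1) unfolding mpoly_deg_le_def by simp
  qed (use c(2) in \<open>simp add: mpoly_eval_def sum_distrib_left mult.assoc\<close>)
qed

lemma cube_poly_sum:
  "finite A \<Longrightarrow> (\<And>a. a \<in> A \<Longrightarrow> cube_poly n d (g a)) \<Longrightarrow> cube_poly n d (\<lambda>x. \<Sum>a\<in>A. g a x)"
proof (induction A rule: finite_induct)
  case empty
  then show ?case using cube_poly_const[of n 0] cube_poly_mono by fastforce
next
  case (insert a F)
  then show ?case by (simp add: cube_poly_add)
qed

text \<open>On the cube a product of monomials is the monomial of the union, since
  \<open>bit b * bit b = bit b\<close>.\<close>

lemma cube_poly_mult:
  assumes "cube_poly n d g" "cube_poly n e h"
  shows "cube_poly n (d + e) (\<lambda>x. g x * h x)"
proof -
  obtain a where a: "mpoly_deg_le n a d" "\<forall>x\<in>cube n. g x = mpoly_eval n a x"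
    using assms(1) unfolding cube_poly_def by blast
  obtain b where b: "mpoly_deg_le n b e" "\<forall>x\<in>cube n. h x = mpoly_eval n b x"
    using assms(2) unfolding cube_poly_def by blast
  define P where "P = Pow {0..<n}"
  have finP: "finite P" and fin: "\<And>S. S \<in> P \<Longrightarrow> finite S"
    unfolding P_def by (auto intro: finite_subset)
  define c where "c U = (\<Sum>p\<in>{p\<in>P\<times>P. fst p \<union> snd p = U}. a (fst p) * b (snd p))" for U
  have "mpoly_deg_le n c (d + e)"
    unfolding mpoly_deg_le_def
  proof (intro ballI impI)
    fix U assume U: "U \<in> Pow {0..<n}" "c U \<noteq> 0"
    then obtain p where p: "p \<in> P \<times> P" "fst p \<union> snd p = U" "a (fst p) * b (snd p) \<noteq> 0"
      unfolding c_def using sum.neutral by (smt (verit, del_insts) mem_Collect_eq)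
    have "card (fst p) \<le> d" "card (snd p) \<le> e"
      using a(1) b(1) p unfolding mpoly_deg_le_def P_def by auto
    then show "card U \<le> d + e" using p(2) card_Un_le[of "fst p" "snd p"] by simp
  qed
  moreover have "g x * h x = mpoly_eval n c x" if x: "x \<in> cube n" for x
  proof -
    define m where "m S = (\<Prod>i\<in>S. bit (x ! i))" for S
    have "g x * h x = (\<Sum>S\<in>P. \<Sum>T\<in>P. (a S * m S) * (b T * m T))"
      using a(2) b(2) x unfolding mpoly_eval_def P_def m_def by (simp add: sum_product)
    also have "\<dots> = (\<Sum>p\<in>P\<times>P. a (fst p) * b (snd p) * m (fst p \<union> snd p))"
      unfolding sum.cartesian_product by (intro sum.cong refl) (auto simp: m_def prod_bit_Un fin)
    also have "\<dots> = (\<Sum>U\<in>P. \<Sum>p\<in>{p\<in>P\<times>P. fst p \<union> snd p = U}. a (fst p) * b (snd p) * m (fst p \<union> snd p))"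
      by (rule sum.group[symmetric]) (auto simp: finP P_def)
    also have "\<dots> = (\<Sum>U\<in>P. c U * m U)"
      unfolding c_def sum_distrib_right by (intro sum.cong refl) auto
    finally show ?thesis unfolding mpoly_eval_def P_def m_def .
  qed
  ultimately show ?thesis unfolding cube_poly_def by blast
qed

lemma cube_poly_one_minus_bit: "i < n \<Longrightarrow> cube_poly n 1 (\<lambda>x. 1 - bit (x ! i))"
proof -
  assume "i < n"
  have "cube_poly n 1 (\<lambda>x. 1 + (-1) * bit (x ! i))"
    by (rule cube_poly_add[OF cube_poly_mono[OF cube_poly_const] cube_poly_scale[OF cube_poly_bit[OF \<open>i < n\<close>]]]) simp
  then show ?thesis by simp
qed

lemma sum_abs_pos_if_sum_mult_nonzero:
  fixes a h :: "'i \<Rightarrow> real"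
  assumes "finite I" "(\<Sum>i\<in>I. a i * h i) \<noteq> 0"
  shows "0 < (\<Sum>i\<in>I. \<bar>a i\<bar>)"
proof (rule ccontr)
  assume "\<not> 0 < (\<Sum>i\<in>I. \<bar>a i\<bar>)"
  then have "(\<Sum>i\<in>I. \<bar>a i\<bar>) = 0"
    by (meson abs_ge_zero not_less order_antisym sum_nonneg)
  then have "\<forall>i\<in>I. a i = 0"
    using sum_nonneg_eq_0_iff[OF assms(1), of "\<lambda>i. \<bar>a i\<bar>"] by simp
  then show False using assms(2) by simp
qed

section \<open>Randomized decision trees and polynomials\<close>

lemma cube_poly_dt_eval: "dt_valid n t \<Longrightarrow> cube_poly n (dt_depth t) (\<lambda>x. bit (dt_eval t x))"
proof (induction t)
  case (Leaf b)
  then show ?case using cube_poly_const[of n "bit b"] by simp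
next
  case (Query i t0 t1)
  let ?d = "Suc (max (dt_depth t0) (dt_depth t1))"
  have i: "i < n" and p0: "cube_poly n (dt_depth t0) (\<lambda>x. bit (dt_eval t0 x))"
    and p1: "cube_poly n (dt_depth t1) (\<lambda>x. bit (dt_eval t1 x))" using Query by auto
  have "cube_poly n ?d (\<lambda>x. bit (x ! i) * bit (dt_eval t1 x))"
    using cube_poly_mult[OF cube_poly_bit[OF i] p1] cube_poly_mono by fastforce
  moreover have "cube_poly n ?d (\<lambda>x. (1 - bit (x ! i)) * bit (dt_eval t0 x))"
    using cube_poly_mult[OF cube_poly_one_minus_bit[OF i] p0] cube_poly_mono by fastforce
  ultimately have "cube_poly n ?d (\<lambda>x. bit (dt_eval (Query i t0 t1) x))"
    by (rule cube_poly_cong[OF cube_poly_add]) (auto simp: bit_def)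
  then show ?case by simp
qed

lemma finite_valid_dtrees: "finite {t. dt_valid n t \<and> dt_depth t \<le> k}"
proof (induction k)
  case 0
  have "{t. dt_valid n t \<and> dt_depth t \<le> 0} \<subseteq> range Leaf"
    by (auto elim: dt_depth.elims)
  then show ?case by (rule finite_subset) simp
next
  case (Suc k)
  let ?T = "{t. dt_valid n t \<and> dt_depth t \<le> k}"
  have "{t. dt_valid n t \<and> dt_depth t \<le> Suc k} \<subseteq>
      range Leaf \<union> (\<lambda>(i, t0, t1). Query i t0 t1) ` ({..<n} \<times> ?T \<times> ?T)"
  proof
    fix t assume "t \<in> {t. dt_valid n t \<and> dt_depth t \<le> Suc k}"
    then show "t \<in> range Leaf \<union> (\<lambda>(i, t0, t1). Query i t0 t1) ` ({..<n} \<times> ?T \<times> ?T)"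
      by (cases t) (auto simp: image_iff)
  qed
  then show ?case by (rule finite_subset) (use Suc in simp)
qed

lemma cube_poly_accept_prob:
  assumes "\<forall>t\<in>set_pmf P. dt_valid n t \<and> dt_depth t \<le> k"
  shows "cube_poly n k (\<lambda>x. measure_pmf.prob P {t. dt_eval t x})"
proof -
  have fin: "finite (set_pmf P)"
    using assms by (blast intro: finite_subset[OF _ finite_valid_dtrees])
  have "measure_pmf.prob P {t. dt_eval t x} = (\<Sum>t\<in>set_pmf P. pmf P t * bit (dt_eval t x))" for x
  proof -
    have "measure_pmf.prob P {t. dt_eval t x} = measure_pmf.prob P ({t. dt_eval t x} \<inter> set_pmf P)"
      by (simp add: measure_Int_set_pmf)
    also have "\<dots> = sum (pmf P) ({t. dt_eval t x} \<inter> set_pmf P)"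
      using fin by (simp add: measure_measure_pmf_finite)
    also have "\<dots> = (\<Sum>t\<in>set_pmf P. pmf P t * bit (dt_eval t x))"
      using fin by (simp add: sum.inter_restrict Int_commute bit_def if_distrib cong: if_cong)
    finally show ?thesis .
  qed
  moreover have "cube_poly n k (\<lambda>x. \<Sum>t\<in>set_pmf P. pmf P t * bit (dt_eval t x))"
    using fin assms by (intro cube_poly_sum cube_poly_scale) (auto intro: cube_poly_mono cube_poly_dt_eval)
  ultimately show ?thesis by (simp add: cube_poly_cong)
qed

lemma measure_pmf_prob_Collect_not: "measure_pmf.prob P {t. \<not> Q t} = 1 - measure_pmf.prob P {t. Q t}"
proof -
  have "{t. \<not> Q t} = space (measure_pmf P) - {t. Q t}" by auto
  then show ?thesis using measure_pmf.prob_compl[of "{t. Q t}" P] by simp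
qed

lemma unbounded_poly_of_rand_alg:
  assumes "rand_alg_computes n X f k P" "X \<subseteq> cube n"
  shows "\<exists>c. unbounded_poly n X f c \<and> mpoly_deg_le n c k"
proof -
  have supp: "\<forall>t\<in>set_pmf P. dt_valid n t \<and> dt_depth t \<le> k"
    and correct: "\<forall>x\<in>X. measure_pmf.prob P {t. dt_eval t x = f x} > 1/2"
    using assms(1) unfolding rand_alg_computes_def by auto
  obtain c where c: "mpoly_deg_le n c k"
    and acc: "\<forall>x\<in>cube n. measure_pmf.prob P {t. dt_eval t x} = mpoly_eval n c x"
    using cube_poly_accept_prob[OF supp] unfolding cube_poly_def by blast
  have "unbounded_poly n X f c"
    unfolding unbounded_poly_def
  proof (intro conjI ballI impI)
    fix x assume "x \<in> cube n"
    then show "0 \<le> mpoly_eval n c x" "mpoly_eval n c x \<le> 1"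
      using acc measure_nonneg measure_pmf.prob_le_1 by metis+
  next
    fix x assume "x \<in> X"
    then have "x \<in> cube n" "measure_pmf.prob P {t. dt_eval t x = f x} > 1/2"
      using assms(2) correct by auto
    then show "f x \<Longrightarrow> 1/2 < mpoly_eval n c x" "\<not> f x \<Longrightarrow> mpoly_eval n c x < 1/2"
      using acc measure_pmf_prob_Collect_not[of P "\<lambda>t. dt_eval t x"] by auto
  qed
  with c show ?thesis by blast
qed

text \<open>\<open>acc\<close> holds the bits read so far.\<close>

function full_dtree :: "nat \<Rightarrow> (bool list \<Rightarrow> bool) \<Rightarrow> nat \<Rightarrow> bool list \<Rightarrow> dtree" where
  "full_dtree n f i acc = (if i < n
     then Query i (full_dtree n f (Suc i) (acc @ [False])) (full_dtree n f (Suc i) (acc @ [True]))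
     else Leaf (f acc))"
  by auto
termination by (relation "Wellfounded.measure (\<lambda>(n, f, i, acc). n - i)") auto

declare full_dtree.simps[simp del]

lemma full_dtree_valid: "dt_valid n (full_dtree n f i acc) \<and> dt_depth (full_dtree n f i acc) \<le> n - i"
proof (induction n f i acc rule: full_dtree.induct)
  case (1 n f i acc)
  then show ?case by (auto simp: full_dtree.simps[of n f i acc])
qed

lemma full_dtree_eval:
  "length x = n \<Longrightarrow> i \<le> n \<Longrightarrow> acc = take i x \<Longrightarrow> dt_eval (full_dtree n f i acc) x = f x"
proof (induction n f i acc rule: full_dtree.induct)
  case (1 n f i acc)
  show ?case
  proof (cases "i < n")
    case True
    then have "take (Suc i) x = acc @ [x ! i]" using 1(3,5) by (simp add: take_Suc_conv_app_nth)
    then show ?thesis using 1 True by (subst full_dtree.simps) auto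
  next
    case False
    then show ?thesis using 1 by (subst full_dtree.simps) auto
  qed
qed

lemma rand_alg_computes_full_dtree:
  "X \<subseteq> cube n \<Longrightarrow> rand_alg_computes n X f n (return_pmf (full_dtree n f 0 []))"
  unfolding rand_alg_computes_def using full_dtree_valid[of n f 0 "[]"]
  by (auto simp: full_dtree_eval cube_def subset_iff)

fun conj_dtree :: "nat list \<Rightarrow> bool \<Rightarrow> bool \<Rightarrow> dtree" where
  "conj_dtree [] b0 b1 = Leaf b1"
| "conj_dtree (i # is) b0 b1 = Query i (Leaf b0) (conj_dtree is b0 b1)"

lemma conj_dtree_eval: "dt_eval (conj_dtree is b0 b1) x = (if \<forall>i\<in>set is. x ! i then b1 else b0)"
  by (induction "is") auto

lemma conj_dtree_depth: "dt_depth (conj_dtree is b0 b1) = length is"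
  by (induction "is") auto

lemma conj_dtree_valid: "set is \<subseteq> {..<n} \<Longrightarrow> dt_valid n (conj_dtree is b0 b1)"
  by (induction "is") auto

lemma ex_pmf_finite_mixture:
  fixes w :: "'i \<Rightarrow> real" and g :: "'i \<Rightarrow> 'a"
  assumes "finite I" "\<forall>i\<in>I. 0 \<le> w i" "sum w I = 1"
  shows "\<exists>P. set_pmf P \<subseteq> g ` I \<and> (\<forall>A. measure_pmf.prob P A = (\<Sum>i\<in>I. if g i \<in> A then w i else 0))"
proof -
  obtain xs where xs: "set xs = I" "distinct xs"
    using finite_distinct_list[OF assms(1)] by blast
  define L where "L = map (\<lambda>i. (g i, w i)) xs"
  have sum_L: "sum_list (map h L) = (\<Sum>i\<in>I. h (g i, w i))" for h :: "'a \<times> real \<Rightarrow> real"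
    unfolding L_def using xs by (simp add: sum_list_distinct_conv_sum_set comp_def)
  have wf: "pmf_of_list_wf L"
    by (rule pmf_of_list_wfI) (use assms sum_L[of snd] in \<open>auto simp: L_def xs\<close>)
  show ?thesis
  proof (intro exI conjI allI)
    show "set_pmf (pmf_of_list L) \<subseteq> g ` I"
      using set_pmf_of_list[OF wf] unfolding L_def xs(1)[symmetric] by auto
    fix A
    show "measure_pmf.prob (pmf_of_list L) A = (\<Sum>i\<in>I. if g i \<in> A then w i else 0)"
      using sum_L[of "\<lambda>p. if fst p \<in> A then snd p else 0"]
      by (simp add: measure_pmf_of_list[OF wf] sum_list_map_filter' cong: if_cong)
  qed
qed

text \<open>The sampling algorithm picks \<open>S\<close> with probability \<open>|a S| / \<Sum>|a|\<close> and a fair coin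
  \<open>b\<close>, and runs \<open>sign_dtree a S b\<close>: if all bits in \<open>S\<close> are 1 it outputs the sign of \<open>a S\<close>,
  otherwise the coin.\<close>

definition sign_dtree :: "(nat set \<Rightarrow> real) \<Rightarrow> nat set \<Rightarrow> bool \<Rightarrow> dtree" where
  "sign_dtree a S b = (if a S = 0 then Leaf b else conj_dtree (sorted_list_of_set S) b (0 < a S))"

lemma sign_dtree_valid:
  assumes "S \<subseteq> {0..<n}" "mpoly_deg_le n a d"
  shows "dt_valid n (sign_dtree a S b) \<and> dt_depth (sign_dtree a S b) \<le> d"
proof -
  have "finite S" using assms(1) by (rule finite_subset) simp
  moreover have "a S \<noteq> 0 \<Longrightarrow> card S \<le> d" using assms unfolding mpoly_deg_le_def by auto
  ultimately show ?thesis
    using assms(1) unfolding sign_dtree_def by (auto simp: conj_dtree_depth intro!: conj_dtree_valid)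
qed

lemma sign_dtree_coin_sum:
  "finite S \<Longrightarrow> \<bar>a S\<bar> * (bit (dt_eval (sign_dtree a S False) x) + bit (dt_eval (sign_dtree a S True) x))
     = \<bar>a S\<bar> + a S * (\<Prod>i\<in>S. bit (x ! i))"
  by (cases "a S = 0") (auto simp: sign_dtree_def conj_dtree_eval prod_bit_eq_indicator bit_def)

lemma rand_alg_sign_sampling:
  fixes a :: "nat set \<Rightarrow> real" and n d :: nat
  defines "A \<equiv> \<Sum>S\<in>Pow {0..<n}. \<bar>a S\<bar>"
  assumes deg: "mpoly_deg_le n a d" and pos: "0 < A"
  shows "\<exists>P. (\<forall>t\<in>set_pmf P. dt_valid n t \<and> dt_depth t \<le> d) \<and>
             (\<forall>x. measure_pmf.prob P {t. dt_eval t x} = 1/2 + mpoly_eval n a x / (2 * A))"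
proof -
  define I where "I = Pow {0..<n} \<times> (UNIV :: bool set)"
  define w where "w = (\<lambda>(S, b::bool). \<bar>a S\<bar> / (2 * A))"
  have sum_I: "(\<Sum>i\<in>I. h i) = (\<Sum>S\<in>Pow {0..<n}. h (S, False) + h (S, True))" for h :: "_ \<Rightarrow> real"
    unfolding I_def sum.cartesian_product' by (simp add: UNIV_bool)
  have "finite I" unfolding I_def by simp
  moreover have "\<forall>i\<in>I. 0 \<le> w i" using pos unfolding w_def by auto
  moreover have "sum w I = 1"
    unfolding sum_I w_def A_def using pos by (simp add: sum_divide_distrib[symmetric] A_def)
  ultimately obtain P where P: "set_pmf P \<subseteq> (\<lambda>(S, b). sign_dtree a S b) ` I"
    and prob: "\<And>B. measure_pmf.prob P B = (\<Sum>i\<in>I. if (\<lambda>(S, b). sign_dtree a S b) i \<in> B then w i else 0)"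
    using ex_pmf_finite_mixture[of I w "\<lambda>(S, b). sign_dtree a S b"] by blast
  have "dt_valid n t \<and> dt_depth t \<le> d" if t: "t \<in> set_pmf P" for t
  proof -
    obtain i where "i \<in> I" "t = (\<lambda>(S, b). sign_dtree a S b) i" using P t by blast
    then obtain S b where "S \<subseteq> {0..<n}" "t = sign_dtree a S b" unfolding I_def by (cases i) auto
    then show ?thesis using sign_dtree_valid[OF _ deg] by simp
  qed
  moreover have "measure_pmf.prob P {t. dt_eval t x} = 1/2 + mpoly_eval n a x / (2 * A)" for x
  proof -
    have per_S: "(if dt_eval (sign_dtree a S False) x then w (S, False) else 0)
        + (if dt_eval (sign_dtree a S True) x then w (S, True) else 0)
        = \<bar>a S\<bar> / (2 * A) + a S * (\<Prod>i\<in>S. bit (x ! i)) / (2 * A)" if "S \<in> Pow {0..<n}" for S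
    proof -
      have "finite S" using that finite_subset by blast
      have "(if dt_eval (sign_dtree a S False) x then w (S, False) else 0)
          + (if dt_eval (sign_dtree a S True) x then w (S, True) else 0)
          = \<bar>a S\<bar> / (2 * A) * (bit (dt_eval (sign_dtree a S False) x) + bit (dt_eval (sign_dtree a S True) x))"
        unfolding w_def bit_def by simp
      also have "\<dots> = \<bar>a S\<bar> / (2 * A) + a S * (\<Prod>i\<in>S. bit (x ! i)) / (2 * A)"
        unfolding times_divide_eq_left sign_dtree_coin_sum[OF \<open>finite S\<close>] by (rule add_divide_distrib)
      finally show ?thesis .
    qed
    have "measure_pmf.prob P {t. dt_eval t x} =
        (\<Sum>S\<in>Pow {0..<n}. \<bar>a S\<bar> / (2 * A) + a S * (\<Prod>i\<in>S. bit (x ! i)) / (2 * A))"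
      unfolding prob sum_I by (intro sum.cong refl) (simp add: per_S)
    also have "\<dots> = 1/2 + mpoly_eval n a x / (2 * A)"
      using pos by (simp add: sum.distrib mpoly_eval_def A_def flip: sum_divide_distrib)
    finally show ?thesis .
  qed
  ultimately show ?thesis by blast
qed

lemma rand_alg_of_unbounded_poly:
  assumes up: "unbounded_poly n X f c" and deg: "mpoly_deg_le n c d" and X: "X \<subseteq> cube n"
  shows "\<exists>P. rand_alg_computes n X f d P"
proof (cases "X = {}")
  case True
  then show ?thesis by (intro exI[of _ "return_pmf (Leaf True)"]) (simp add: rand_alg_computes_def)
next
  case False
  define a where "a S = c S - (if S = {} then 1/2 else 0)" for S
  have eval_a: "mpoly_eval n a x = mpoly_eval n c x - 1/2" for x
    using mpoly_eval_single[of "{}" n "1/2" x]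
    by (simp add: a_def mpoly_eval_def left_diff_distrib sum_subtractf)
  have sign: "x \<in> X \<Longrightarrow> (f x \<longrightarrow> 0 < mpoly_eval n a x) \<and> (\<not> f x \<longrightarrow> mpoly_eval n a x < 0)" for x
    using up unfolding unbounded_poly_def eval_a by auto
  have "mpoly_deg_le n a d" using deg unfolding mpoly_deg_le_def a_def by auto
  moreover have "0 < (\<Sum>S\<in>Pow {0..<n}. \<bar>a S\<bar>)"
  proof -
    obtain x where "x \<in> X" using False by blast
    then have "mpoly_eval n a x \<noteq> 0" using sign by fastforce
    then show ?thesis unfolding mpoly_eval_def by (intro sum_abs_pos_if_sum_mult_nonzero) auto
  qed
  ultimately obtain P where P: "\<forall>t\<in>set_pmf P. dt_valid n t \<and> dt_depth t \<le> d"
    and prob: "\<And>x. measure_pmf.prob P {t. dt_eval t x} = 1/2 + mpoly_eval n a x / (2 * (\<Sum>S\<in>Pow {0..<n}. \<bar>a S\<bar>))"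
    and pos: "0 < (\<Sum>S\<in>Pow {0..<n}. \<bar>a S\<bar>)"
    using rand_alg_sign_sampling by blast
  have "measure_pmf.prob P {t. dt_eval t x = f x} > 1/2" if "x \<in> X" for x
    using prob[of x] sign[OF that] pos measure_pmf_prob_Collect_not[of P "\<lambda>t. dt_eval t x"]
    by (cases "f x") (simp_all add: divide_neg_pos)
  with P show ?thesis unfolding rand_alg_computes_def by blast
qed

section \<open>Unitary matrices\<close>

lemma sum_delta_mult:
  "finite A \<Longrightarrow> (\<Sum>c\<in>A. (if c = s then 1 else 0) * g c) = (if s \<in> A then g s else (0::'a::comm_ring_1))"
  by (simp add: if_distrib[of "\<lambda>y. y * _"] cong: if_cong)

lemma mult_mat_vec_index:
  assumes "A \<in> carrier_mat N N'" "v \<in> carrier_vec N'" "r < N"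
  shows "(A *\<^sub>v v) $ r = (\<Sum>c<N'. A $$ (r, c) * v $ c)"
  using assms by (auto simp: scalar_prod_def atLeast0LessThan intro!: sum.cong)

lemma mult_mat_vec_unit_vec:
  fixes B :: "'a::comm_ring_1 mat"
  assumes "B \<in> carrier_mat N N" "c < N"
  shows "B *\<^sub>v unit_vec N c = col B c"
proof (rule eq_vecI)
  fix i assume "i < dim_vec (col B c)"
  then have i: "i < N" using assms by simp
  have "(B *\<^sub>v unit_vec N c) $ i = (\<Sum>j<N. B $$ (i, j) * unit_vec N c $ j)"
    by (rule mult_mat_vec_index[OF assms(1) _ i]) simp
  also have "\<dots> = B $$ (i, c)"
    using assms by (simp add: unit_vec_def if_distrib[of "\<lambda>y. _ * y"] cong: if_cong)
  finally show "(B *\<^sub>v unit_vec N c) $ i = col B c $ i" using i assms by simp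
qed (use assms in simp)

lemma unitaryI_vec:
  assumes A: "A \<in> carrier_mat N N" and inv: "\<And>u. u \<in> carrier_vec N \<Longrightarrow> adjoint A *\<^sub>v (A *\<^sub>v u) = u"
  shows "unitary N A"
  unfolding unitary_def
proof (intro conjI A eq_matI)
  have B: "adjoint A \<in> carrier_mat N N" using A by (simp add: adjoint_def)
  fix r c assume "r < dim_row (1\<^sub>m N)" "c < dim_col (1\<^sub>m N)"
  then have r: "r < N" and c: "c < N" by auto
  have "(adjoint A * A) $$ (r, c) = (adjoint A *\<^sub>v (A *\<^sub>v unit_vec N c)) $ r"
    using A B r c by (simp add: mult_mat_vec_unit_vec)
  also have "\<dots> = unit_vec N c $ r" using inv[of "unit_vec N c"] by simp
  finally show "(adjoint A * A) $$ (r, c) = 1\<^sub>m N $$ (r, c)" using r c by simp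
qed (use A in \<open>auto simp: adjoint_def\<close>)

lemma adjoint_mult:
  assumes "A \<in> carrier_mat N N" "B \<in> carrier_mat N N"
  shows "adjoint (A * B) = adjoint B * adjoint A"
proof (rule eq_matI)
  fix i j assume "i < dim_row (adjoint B * adjoint A)" "j < dim_col (adjoint B * adjoint A)"
  then have i: "i < N" and j: "j < N" using assms by (auto simp: adjoint_def)
  have "adjoint (A * B) $$ (i, j) = cnj (\<Sum>k<N. A $$ (j, k) * B $$ (k, i))"
    using assms i j by (simp add: adjoint_def scalar_prod_def atLeast0LessThan)
  also have "\<dots> = (\<Sum>k<N. cnj (B $$ (k, i)) * cnj (A $$ (j, k)))"
    by (simp add: cnj_sum mult.commute)
  also have "\<dots> = (adjoint B * adjoint A) $$ (i, j)"
    using assms i j by (simp add: adjoint_def scalar_prod_def atLeast0LessThan)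
  finally show "adjoint (A * B) $$ (i, j) = (adjoint B * adjoint A) $$ (i, j)" .
qed (use assms in \<open>auto simp: adjoint_def\<close>)

lemma unitary_mult:
  assumes "unitary N A" "unitary N B"
  shows "unitary N (A * B)"
proof -
  have A: "A \<in> carrier_mat N N" and B: "B \<in> carrier_mat N N"
    and eA: "adjoint A * A = 1\<^sub>m N" and eB: "adjoint B * B = 1\<^sub>m N"
    using assms unfolding unitary_def by auto
  have aA: "adjoint A \<in> carrier_mat N N" and aB: "adjoint B \<in> carrier_mat N N"
    using A B by (auto simp: adjoint_def)
  have "adjoint (A * B) * (A * B) = adjoint B * (adjoint A * A * B)"
    using A B aA aB by (simp add: adjoint_mult assoc_mult_mat[of _ N N _ N _ N])
  also have "\<dots> = 1\<^sub>m N" using eA eB B by simp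
  finally show ?thesis unfolding unitary_def using A B by auto
qed

lemma unitary_one: "unitary N (1\<^sub>m N)"
proof -
  have "adjoint (1\<^sub>m N) = (1\<^sub>m N :: complex mat)" by (rule eq_matI) (auto simp: adjoint_def)
  then show ?thesis unfolding unitary_def by simp
qed

definition sqnorm :: "complex vec \<Rightarrow> real" where
  "sqnorm v = (\<Sum>j<dim_vec v. (cmod (v $ j))\<^sup>2)"

lemma sqnorm_unit_vec: "j < N \<Longrightarrow> sqnorm (unit_vec N j) = 1"
  unfolding sqnorm_def by (simp add: unit_vec_def if_distrib[of "\<lambda>y. (cmod y)\<^sup>2"] cong: if_cong)

lemma unitary_sqnorm:
  assumes "unitary N U" "v \<in> carrier_vec N"
  shows "sqnorm (U *\<^sub>v v) = sqnorm v"
proof -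
  have U: "U \<in> carrier_mat N N" and UU: "adjoint U * U = 1\<^sub>m N" using assms unfolding unitary_def by auto
  have cols: "(\<Sum>r<N. cnj (U $$ (r, c')) * U $$ (r, c)) = (if c' = c then 1 else 0)"
    if "c < N" "c' < N" for c c'
    using arg_cong[OF UU, of "\<lambda>M. M $$ (c', c)"] U that
    by (simp add: adjoint_def scalar_prod_def atLeast0LessThan)
  have sq: "complex_of_real (sqnorm w) = (\<Sum>j<dim_vec w. w $ j * cnj (w $ j))" for w
    unfolding sqnorm_def of_real_sum by (intro sum.cong refl) (rule complex_norm_square)
  have "complex_of_real (sqnorm (U *\<^sub>v v)) =
      (\<Sum>r<N. (\<Sum>c<N. U $$ (r, c) * v $ c) * cnj (\<Sum>c'<N. U $$ (r, c') * v $ c'))"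
    unfolding sq using U assms(2) by (simp del: index_mult_mat_vec add: mult_mat_vec_index)
  also have "\<dots> = (\<Sum>r<N. \<Sum>c<N. \<Sum>c'<N. (U $$ (r, c) * v $ c) * (cnj (U $$ (r, c')) * cnj (v $ c')))"
    unfolding cnj_sum sum_product by simp
  also have "\<dots> = (\<Sum>c<N. \<Sum>c'<N. \<Sum>r<N. (U $$ (r, c) * v $ c) * (cnj (U $$ (r, c')) * cnj (v $ c')))"
    by (rule trans[OF sum.swap], rule sum.cong[OF refl], rule sum.swap)
  also have "\<dots> = (\<Sum>c<N. \<Sum>c'<N. (v $ c * cnj (v $ c')) * (\<Sum>r<N. cnj (U $$ (r, c')) * U $$ (r, c)))"
    by (intro sum.cong refl) (unfold sum_distrib_left, intro sum.cong refl, simp add: ac_simps)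
  also have "\<dots> = (\<Sum>c<N. \<Sum>c'<N. (if c' = c then 1 else 0) * (v $ c * cnj (v $ c')))"
    by (intro sum.cong refl) (simp add: cols)
  also have "\<dots> = (\<Sum>c<N. v $ c * cnj (v $ c))"
    by (simp add: sum_delta_mult)
  also have "\<dots> = complex_of_real (sqnorm v)" unfolding sq using assms(2) by simp
  finally show ?thesis by (simp only: of_real_eq_iff)
qed

definition perm_mat :: "nat \<Rightarrow> (nat \<Rightarrow> nat) \<Rightarrow> complex mat" where
  "perm_mat N \<pi> = mat N N (\<lambda>(r, c). if c = \<pi> r then 1 else 0)"

lemma perm_mat_carrier: "perm_mat N \<pi> \<in> carrier_mat N N"
  unfolding perm_mat_def by simp

lemma perm_mat_vec:
  assumes "\<pi> r < N" "v \<in> carrier_vec N" "r < N"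
  shows "(perm_mat N \<pi> *\<^sub>v v) $ r = v $ \<pi> r"
proof -
  have "(perm_mat N \<pi> *\<^sub>v v) $ r = (\<Sum>c<N. (if c = \<pi> r then 1 else 0) * v $ c)"
    unfolding mult_mat_vec_index[OF perm_mat_carrier assms(2,3)]
    by (intro sum.cong) (auto simp: perm_mat_def assms(3))
  then show ?thesis using assms(1) by (simp add: sum_delta_mult)
qed

lemma perm_mat_unitary:
  assumes bij: "bij_betw \<pi> {0..<N} {0..<N}"
  shows "unitary N (perm_mat N \<pi>)"
proof (rule unitaryI_vec[OF perm_mat_carrier])
  define \<rho> where "\<rho> = the_inv_into {0..<N} \<pi>"
  have \<rho>: "bij_betw \<rho> {0..<N} {0..<N}" unfolding \<rho>_def by (rule bij_betw_the_inv_into[OF bij])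
  have \<pi>\<rho>: "\<pi> (\<rho> r) = r" and \<rho>\<pi>: "\<rho> (\<pi> r) = r" if "r < N" for r
    unfolding \<rho>_def using f_the_inv_into_f_bij_betw[OF bij] the_inv_into_f_f[OF bij_betw_imp_inj_on[OF bij]] that
    by simp_all
  have lt: "\<pi> r < N" "\<rho> r < N" if "r < N" for r using bij \<rho> that bij_betwE by fastforce+
  have adj: "adjoint (perm_mat N \<pi>) = perm_mat N \<rho>"
  proof (rule eq_matI)
    fix i j assume "i < dim_row (perm_mat N \<rho>)" "j < dim_col (perm_mat N \<rho>)"
    then have i: "i < N" and j: "j < N" by (auto simp: perm_mat_def)
    have "(i = \<pi> j) = (j = \<rho> i)" using \<pi>\<rho>[OF i] \<rho>\<pi>[OF j] by metis
    then show "adjoint (perm_mat N \<pi>) $$ (i, j) = perm_mat N \<rho> $$ (i, j)"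
      using i j by (simp add: adjoint_def perm_mat_def)
  qed (auto simp: adjoint_def perm_mat_def)
  fix u :: "complex vec" assume u: "u \<in> carrier_vec N"
  show "adjoint (perm_mat N \<pi>) *\<^sub>v (perm_mat N \<pi> *\<^sub>v u) = u"
  proof (rule eq_vecI)
    fix r assume "r < dim_vec u"
    then have r: "r < N" using u by simp
    have "perm_mat N \<pi> *\<^sub>v u \<in> carrier_vec N" using perm_mat_carrier u by (metis mult_mat_vec_carrier)
    then show "(adjoint (perm_mat N \<pi>) *\<^sub>v (perm_mat N \<pi> *\<^sub>v u)) $ r = u $ r"
      unfolding adj using perm_mat_vec[OF lt(2) _ r] perm_mat_vec[OF _ u] lt \<pi>\<rho> r by simp
  qed (use u in \<open>simp add: adj perm_mat_def adjoint_def\<close>)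
qed

lemma qrun_unitary:
  assumes "unitary N Ox" "\<forall>U\<in>set Us. unitary N U" "v \<in> carrier_vec N"
  shows "qrun Ox Us v \<in> carrier_vec N \<and> sqnorm (qrun Ox Us v) = sqnorm v"
  using assms
proof (induction Ox Us v rule: qrun.induct)
  case (2 Ox U v)
  then show ?case using unitary_sqnorm[of N U v] unfolding unitary_def by auto
next
  case (3 Ox U V Us v)
  note Ox = "3.prems"(1) and v = "3.prems"(3)
  have U: "unitary N U" using "3.prems"(2) by simp
  then have "U *\<^sub>v v \<in> carrier_vec N" "sqnorm (U *\<^sub>v v) = sqnorm v"
    using v unitary_sqnorm[OF U] unfolding unitary_def by auto
  moreover have "Ox \<in> carrier_mat N N" using Ox unfolding unitary_def by simp
  ultimately have "Ox *\<^sub>v (U *\<^sub>v v) \<in> carrier_vec N" "sqnorm (Ox *\<^sub>v (U *\<^sub>v v)) = sqnorm v"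
    using unitary_sqnorm[OF Ox] by auto
  then show ?case using "3.IH" "3.prems" by simp
qed simp

section \<open>The query operator\<close>

definition qidx_i :: "nat \<Rightarrow> nat \<Rightarrow> nat" where "qidx_i m r = r div m div 2"
definition qidx_b :: "nat \<Rightarrow> nat \<Rightarrow> bool" where "qidx_b m r = odd (r div m)"
definition qidx_z :: "nat \<Rightarrow> nat \<Rightarrow> nat" where "qidx_z m r = r mod m"

lemma qidx_components:
  assumes "z < m"
  shows "qidx_i m (qidx m i b z) = i" "qidx_b m (qidx m i b z) = b" "qidx_z m (qidx m i b z) = z"
proof -
  have d: "qidx m i b z div m = 2 * i + (if b then 1 else 0)"
    using assms unfolding qidx_def by simp
  show "qidx_i m (qidx m i b z) = i" "qidx_b m (qidx m i b z) = b"
    unfolding qidx_i_def qidx_b_def d by simp_all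
  show "qidx_z m (qidx m i b z) = z" unfolding qidx_z_def qidx_def using assms by simp
qed

lemma qidx_lt: "i < n \<Longrightarrow> z < m \<Longrightarrow> qidx m i b z < qdim n m"
proof -
  assume a: "i < n" "z < m"
  have "(2 * i + (if b then 1 else 0) + 1) * m \<le> 2 * n * m" using a by (intro mult_right_mono) auto
  then show ?thesis unfolding qidx_def qdim_def using a by (simp add: algebra_simps)
qed

lemma qidx_decompose:
  assumes "r < qdim n m"
  shows "r = qidx m (qidx_i m r) (qidx_b m r) (qidx_z m r)" "qidx_i m r < n" "qidx_z m r < m"
proof -
  have m: "m > 0" using assms unfolding qdim_def by (cases m) auto
  have "2 * (r div m div 2) + (if odd (r div m) then 1 else 0) = r div m"
    using div_mult_mod_eq[of "r div m" 2] by (cases "odd (r div m)") (auto simp: odd_iff_mod_2_eq_one)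
  then show "r = qidx m (qidx_i m r) (qidx_b m r) (qidx_z m r)"
    unfolding qidx_def qidx_i_def qidx_b_def qidx_z_def by simp
  have "r div m < 2 * n" using assms m unfolding qdim_def by (simp add: less_mult_imp_div_less)
  then show "qidx_i m r < n" unfolding qidx_i_def by simp
  show "qidx_z m r < m" unfolding qidx_z_def using m by simp
qed

lemma qidx_eq_iff:
  "z < m \<Longrightarrow> z' < m \<Longrightarrow> qidx m i b z = qidx m i' b' z' \<longleftrightarrow> i = i' \<and> b = b' \<and> z = z'"
proof
  assume "z < m" "z' < m" "qidx m i b z = qidx m i' b' z'"
  then show "i = i' \<and> b = b' \<and> z = z'" using qidx_components[of z m] qidx_components[of z' m] by metis
qed simp

definition query_perm :: "nat \<Rightarrow> bool list \<Rightarrow> nat \<Rightarrow> nat" where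
  "query_perm m x r = qidx m (qidx_i m r) (qidx_b m r \<noteq> x ! qidx_i m r) (qidx_z m r)"

lemma query_perm_lt: "r < qdim n m \<Longrightarrow> query_perm m x r < qdim n m"
  unfolding query_perm_def using qidx_decompose(2,3) by (rule qidx_lt)

lemma query_perm_components:
  assumes "r < qdim n m"
  shows "qidx_i m (query_perm m x r) = qidx_i m r" "qidx_b m (query_perm m x r) = (qidx_b m r \<noteq> x ! qidx_i m r)"
    "qidx_z m (query_perm m x r) = qidx_z m r"
  unfolding query_perm_def using qidx_components[OF qidx_decompose(3)[OF assms]] by simp_all

lemma query_perm_involution: "r < qdim n m \<Longrightarrow> query_perm m x (query_perm m x r) = r"
  using query_perm_components[of r n m x] qidx_decompose(1)[of r n m]
  by (cases "x ! qidx_i m r") (simp_all add: query_perm_def[of m x "query_perm m x r"])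

lemma query_perm_bij: "bij_betw (query_perm m x) {0..<qdim n m} {0..<qdim n m}"
  by (rule bij_betw_byWitness[where f'="query_perm m x"]) (auto simp: query_perm_involution query_perm_lt)

lemma query_op_eq_perm_mat: "query_op n m x = perm_mat (qdim n m) (query_perm m x)"
proof (rule eq_matI)
  fix r c assume "r < dim_row (perm_mat (qdim n m) (query_perm m x))" "c < dim_col (perm_mat (qdim n m) (query_perm m x))"
  then have r: "r < qdim n m" and c: "c < qdim n m" by (auto simp: perm_mat_def)
  have "(\<exists>i<n. \<exists>b z. z < m \<and> c = qidx m i b z \<and> r = qidx m i (b \<noteq> x ! i) z) \<longleftrightarrow> c = query_perm m x r"
  proof
    assume "\<exists>i<n. \<exists>b z. z < m \<and> c = qidx m i b z \<and> r = qidx m i (b \<noteq> x ! i) z"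
    then obtain i b z where "z < m" "c = qidx m i b z" "r = qidx m i (b \<noteq> x ! i) z" by blast
    then show "c = query_perm m x r" unfolding query_perm_def by (cases "x ! i") (simp_all add: qidx_components)
  next
    assume c: "c = query_perm m x r"
    show "\<exists>i<n. \<exists>b z. z < m \<and> c = qidx m i b z \<and> r = qidx m i (b \<noteq> x ! i) z"
    proof (intro exI conjI)
      show "qidx_i m r < n" "qidx_z m r < m" using qidx_decompose[OF r] by simp_all
      show "c = qidx m (qidx_i m r) (qidx_b m r \<noteq> x ! qidx_i m r) (qidx_z m r)"
        using c unfolding query_perm_def .
      show "r = qidx m (qidx_i m r) ((qidx_b m r \<noteq> x ! qidx_i m r) \<noteq> x ! qidx_i m r) (qidx_z m r)"
        using qidx_decompose(1)[OF r] by (cases "x ! qidx_i m r") simp_all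
    qed
  qed
  then show "query_op n m x $$ (r, c) = perm_mat (qdim n m) (query_perm m x) $$ (r, c)"
    using r c unfolding query_op_def perm_mat_def by simp
qed (simp_all add: query_op_def perm_mat_def)

lemma query_op_carrier: "query_op n m x \<in> carrier_mat (qdim n m) (qdim n m)"
  unfolding query_op_eq_perm_mat by (rule perm_mat_carrier)

lemma query_op_vec:
  "v \<in> carrier_vec (qdim n m) \<Longrightarrow> r < qdim n m \<Longrightarrow> (query_op n m x *\<^sub>v v) $ r = v $ query_perm m x r"
  unfolding query_op_eq_perm_mat by (rule perm_mat_vec) (simp_all add: query_perm_lt)

lemma query_op_unitary: "unitary (qdim n m) (query_op n m x)"
  unfolding query_op_eq_perm_mat by (rule perm_mat_unitary[OF query_perm_bij])

lemma accept_prob_bounds: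
  assumes "\<forall>U\<in>set Us. unitary (qdim n m) U" "qdim n m > 0"
  shows "0 \<le> accept_prob n m x Us Acc" "accept_prob n m x Us Acc \<le> 1"
proof -
  define \<psi> where "\<psi> = qrun (query_op n m x) Us (unit_vec (qdim n m) 0)"
  have \<psi>: "\<psi> \<in> carrier_vec (qdim n m)" "sqnorm \<psi> = 1"
    using qrun_unitary[OF query_op_unitary assms(1), of "unit_vec (qdim n m) 0"] sqnorm_unit_vec[OF assms(2)]
    unfolding \<psi>_def by auto
  show "0 \<le> accept_prob n m x Us Acc" unfolding accept_prob_def Let_def by (rule sum_nonneg) simp
  have "accept_prob n m x Us Acc \<le> (\<Sum>j\<in>{0..<qdim n m}. (cmod (\<psi> $ j))\<^sup>2)"
    unfolding accept_prob_def Let_def \<psi>_def[symmetric] by (rule sum_mono2) auto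
  also have "\<dots> = 1" using \<psi> unfolding sqnorm_def by (simp add: atLeast0LessThan)
  finally show "accept_prob n m x Us Acc \<le> 1" .
qed

section \<open>Acceptance probabilities of quantum algorithms are polynomials\<close>

definition ccube_poly :: "nat \<Rightarrow> nat \<Rightarrow> (bool list \<Rightarrow> complex) \<Rightarrow> bool" where
  "ccube_poly n d g \<longleftrightarrow> cube_poly n d (\<lambda>x. Re (g x)) \<and> cube_poly n d (\<lambda>x. Im (g x))"

lemma ccube_poly_const: "ccube_poly n 0 (\<lambda>x. a)"
  unfolding ccube_poly_def by (simp add: cube_poly_const)

lemma ccube_poly_mono: "ccube_poly n d g \<Longrightarrow> d \<le> e \<Longrightarrow> ccube_poly n e g"
  unfolding ccube_poly_def using cube_poly_mono by blast

lemma ccube_poly_cong: "ccube_poly n d g \<Longrightarrow> (\<And>x. x \<in> cube n \<Longrightarrow> g x = h x) \<Longrightarrow> ccube_poly n d h"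
  unfolding ccube_poly_def using cube_poly_cong by metis

lemma ccube_poly_add: "ccube_poly n d g \<Longrightarrow> ccube_poly n d h \<Longrightarrow> ccube_poly n d (\<lambda>x. g x + h x)"
  unfolding ccube_poly_def by (simp add: cube_poly_add)

lemma ccube_poly_sum:
  "finite A \<Longrightarrow> (\<And>a. a \<in> A \<Longrightarrow> ccube_poly n d (g a)) \<Longrightarrow> ccube_poly n d (\<lambda>x. \<Sum>a\<in>A. g a x)"
  unfolding ccube_poly_def by (simp add: Re_sum Im_sum cube_poly_sum)

lemma ccube_poly_scale: "ccube_poly n d g \<Longrightarrow> ccube_poly n d (\<lambda>x. a * g x)"
proof -
  assume g: "ccube_poly n d g"
  have "cube_poly n d (\<lambda>x. Re a * Re (g x) + (- Im a) * Im (g x))"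
    and "cube_poly n d (\<lambda>x. Re a * Im (g x) + Im a * Re (g x))"
    using g unfolding ccube_poly_def by (intro cube_poly_add cube_poly_scale; simp)+
  then show ?thesis unfolding ccube_poly_def by simp
qed

lemma ccube_poly_mult_real:
  "cube_poly n e h \<Longrightarrow> ccube_poly n d g \<Longrightarrow> ccube_poly n (e + d) (\<lambda>x. complex_of_real (h x) * g x)"
  unfolding ccube_poly_def by (simp add: cube_poly_mult)

lemma ccube_poly_mult_mat_vec:
  assumes U: "U \<in> carrier_mat N N" and v: "\<And>x. x \<in> cube n \<Longrightarrow> v x \<in> carrier_vec N"
    and amp: "\<And>r. r < N \<Longrightarrow> ccube_poly n d (\<lambda>x. v x $ r)" and r: "r < N"
  shows "ccube_poly n d (\<lambda>x. (U *\<^sub>v v x) $ r)"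
proof -
  have "ccube_poly n d (\<lambda>x. \<Sum>c<N. U $$ (r, c) * v x $ c)"
    by (intro ccube_poly_sum ccube_poly_scale amp) auto
  then show ?thesis by (rule ccube_poly_cong) (simp del: index_mult_mat_vec add: mult_mat_vec_index[OF U v r])
qed

text \<open>A query raises the degree by one: each amplitude of \<open>O_x v\<close> is
  \<open>(1 - x_i) v|i,b,z\<rangle> + x_i v|i,\<not>b,z\<rangle>\<close>.\<close>

lemma ccube_poly_query_op:
  assumes v: "\<And>x. x \<in> cube n \<Longrightarrow> v x \<in> carrier_vec (qdim n m)"
    and amp: "\<And>r. r < qdim n m \<Longrightarrow> ccube_poly n d (\<lambda>x. v x $ r)" and r: "r < qdim n m"
  shows "ccube_poly n (Suc d) (\<lambda>x. (query_op n m x *\<^sub>v v x) $ r)"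
proof -
  define i b z where "i = qidx_i m r" and "b = qidx_b m r" and "z = qidx_z m r"
  have i: "i < n" and z: "z < m" using qidx_decompose[OF r] unfolding i_def z_def by auto
  have "ccube_poly n (1 + d) (\<lambda>x. complex_of_real (1 - bit (x ! i)) * v x $ qidx m i b z
      + complex_of_real (bit (x ! i)) * v x $ qidx m i (\<not> b) z)"
    by (intro ccube_poly_add ccube_poly_mult_real cube_poly_bit cube_poly_one_minus_bit amp i qidx_lt z)
  then show ?thesis
  proof (rule ccube_poly_cong[OF ccube_poly_mono])
    fix x assume x: "x \<in> cube n"
    have "(query_op n m x *\<^sub>v v x) $ r = v x $ qidx m i (b \<noteq> x ! i) z"
      unfolding query_op_vec[OF v[OF x] r] query_perm_def i_def b_def z_def ..
    then show "complex_of_real (1 - bit (x ! i)) * v x $ qidx m i b z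
        + complex_of_real (bit (x ! i)) * v x $ qidx m i (\<not> b) z = (query_op n m x *\<^sub>v v x) $ r"
      by (cases "x ! i") (auto simp: bit_def)
  qed simp
qed

lemma ccube_poly_qrun:
  assumes "\<forall>U\<in>set Us. U \<in> carrier_mat (qdim n m) (qdim n m)" "Us \<noteq> []"
    and "\<And>x. x \<in> cube n \<Longrightarrow> v x \<in> carrier_vec (qdim n m)"
    and "\<And>r. r < qdim n m \<Longrightarrow> ccube_poly n d (\<lambda>x. v x $ r)"
  shows "(\<forall>x\<in>cube n. qrun (query_op n m x) Us (v x) \<in> carrier_vec (qdim n m)) \<and>
         (\<forall>r<qdim n m. ccube_poly n (d + length Us - 1) (\<lambda>x. qrun (query_op n m x) Us (v x) $ r))"
  using assms
proof (induction Us arbitrary: v d rule: induct_list012)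
  case (2 U)
  then have U: "U \<in> carrier_mat (qdim n m) (qdim n m)" by simp
  show ?case using 2 U ccube_poly_mult_mat_vec[OF U, of n v d] by auto
next
  case (3 U U' Us)
  have U: "U \<in> carrier_mat (qdim n m) (qdim n m)" using "3.prems"(1) by simp
  define w where "w x = query_op n m x *\<^sub>v (U *\<^sub>v v x)" for x
  have Uv: "\<And>x. x \<in> cube n \<Longrightarrow> U *\<^sub>v v x \<in> carrier_vec (qdim n m)"
    using U "3.prems"(3) by (metis mult_mat_vec_carrier)
  then have w: "\<And>x. x \<in> cube n \<Longrightarrow> w x \<in> carrier_vec (qdim n m)"
    unfolding w_def using query_op_carrier by (metis mult_mat_vec_carrier)
  have Uv_amp: "\<And>r. r < qdim n m \<Longrightarrow> ccube_poly n d (\<lambda>x. (U *\<^sub>v v x) $ r)"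
    using ccube_poly_mult_mat_vec[OF U "3.prems"(3,4)] by blast
  have w_amp: "\<And>r. r < qdim n m \<Longrightarrow> ccube_poly n (Suc d) (\<lambda>x. w x $ r)"
    unfolding w_def using ccube_poly_query_op[OF Uv Uv_amp] by blast
  have "(\<forall>x\<in>cube n. qrun (query_op n m x) (U' # Us) (w x) \<in> carrier_vec (qdim n m)) \<and>
         (\<forall>r<qdim n m. ccube_poly n (Suc d + length (U' # Us) - 1) (\<lambda>x. qrun (query_op n m x) (U' # Us) (w x) $ r))"
    by (rule "3.IH"(2)) (use "3.prems"(1) w w_amp in auto)
  then show ?case unfolding w_def by simp
qed simp

lemma unbounded_poly_of_quantum_alg:
  assumes qa: "quantum_alg_computes n X f T m Us Acc" and X: "X \<subseteq> cube n" and n: "n \<ge> 1"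
  shows "\<exists>c. unbounded_poly n X f c \<and> mpoly_deg_le n c (2 * T)"
proof -
  have m: "m \<ge> 1" and len: "length Us = T + 1" and Us: "\<forall>U\<in>set Us. unitary (qdim n m) U"
    and correct: "\<forall>x\<in>X. (f x \<longrightarrow> accept_prob n m x Us Acc > 1/2) \<and> (\<not> f x \<longrightarrow> 1 - accept_prob n m x Us Acc > 1/2)"
    using qa unfolding quantum_alg_computes_def by auto
  have N: "qdim n m > 0" using n m unfolding qdim_def by simp
  define \<psi> where "\<psi> x = qrun (query_op n m x) Us (unit_vec (qdim n m) 0)" for x
  have "\<forall>r<qdim n m. ccube_poly n (0 + length Us - 1) (\<lambda>x. \<psi> x $ r)"
    using ccube_poly_qrun[of Us n m "\<lambda>x. unit_vec (qdim n m) 0" 0] Us len ccube_poly_const[of n]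
      length_greater_0_conv[of Us]
    unfolding \<psi>_def unitary_def by auto
  then have amp: "\<And>r. r < qdim n m \<Longrightarrow> ccube_poly n T (\<lambda>x. \<psi> x $ r)" using len by auto
  have "cube_poly n (2 * T) (\<lambda>x. \<Sum>j\<in>Acc \<inter> {0..<qdim n m}. Re (\<psi> x $ j) * Re (\<psi> x $ j) + Im (\<psi> x $ j) * Im (\<psi> x $ j))"
    using amp unfolding ccube_poly_def mult_2 by (intro cube_poly_sum cube_poly_add cube_poly_mult) auto
  then have "cube_poly n (2 * T) (\<lambda>x. accept_prob n m x Us Acc)"
    by (rule cube_poly_cong) (simp add: accept_prob_def \<psi>_def Let_def cmod_power2 flip: power2_eq_square)
  then obtain c where c: "mpoly_deg_le n c (2 * T)"
    and acc: "\<forall>x\<in>cube n. mpoly_eval n c x = accept_prob n m x Us Acc"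
    unfolding cube_poly_def by fastforce
  have "unbounded_poly n X f c"
    unfolding unbounded_poly_def
    using acc accept_prob_bounds[OF Us N] correct X by (auto simp: subset_iff)
  with c show ?thesis by blast
qed

text \<open>Conjugating the query operator by a Hadamard gate on the \<open>b\<close> qubit gives the phase
  oracle \<open>|i,b,z\<rangle> \<mapsto> (-1)^(b x_i) |i,b,z\<rangle>\<close>.\<close>

definition phase_sign :: "nat \<Rightarrow> bool list \<Rightarrow> nat \<Rightarrow> real" where
  "phase_sign m x r = (if qidx_b m r \<and> x ! qidx_i m r then -1 else 1)"

definition phase_mat :: "nat \<Rightarrow> nat \<Rightarrow> bool list \<Rightarrow> complex mat" where
  "phase_mat n m x = mat (qdim n m) (qdim n m) (\<lambda>(r, c). if c = r then complex_of_real (phase_sign m x r) else 0)"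

definition hadamard_b :: "nat \<Rightarrow> nat \<Rightarrow> complex mat" where
  "hadamard_b n m = mat (qdim n m) (qdim n m) (\<lambda>(r, c).
     if qidx_i m r = qidx_i m c \<and> qidx_z m r = qidx_z m c
     then (if qidx_b m r \<and> qidx_b m c then -1 else 1) / complex_of_real (sqrt 2) else 0)"

lemma phase_mat_carrier: "phase_mat n m x \<in> carrier_mat (qdim n m) (qdim n m)"
  unfolding phase_mat_def by simp

lemma phase_mat_vec:
  assumes "u \<in> carrier_vec (qdim n m)" "r < qdim n m"
  shows "(phase_mat n m x *\<^sub>v u) $ r = complex_of_real (phase_sign m x r) * u $ r"
proof -
  have "(phase_mat n m x *\<^sub>v u) $ r = (\<Sum>c<qdim n m. (if c = r then 1 else 0) * (complex_of_real (phase_sign m x r) * u $ c))"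
    unfolding mult_mat_vec_index[OF phase_mat_carrier assms] by (intro sum.cong) (auto simp: phase_mat_def assms(2))
  then show ?thesis using assms(2) by (simp add: sum_delta_mult)
qed

lemma hadamard_b_carrier: "hadamard_b n m \<in> carrier_mat (qdim n m) (qdim n m)"
  unfolding hadamard_b_def by simp

lemma hadamard_b_dim [simp]: "dim_row (hadamard_b n m) = qdim n m" "dim_col (hadamard_b n m) = qdim n m"
  unfolding hadamard_b_def by simp_all

lemma hadamard_b_vec:
  assumes u: "u \<in> carrier_vec (qdim n m)" and r: "r < qdim n m"
  shows "(hadamard_b n m *\<^sub>v u) $ r = (u $ qidx m (qidx_i m r) False (qidx_z m r)
            + (if qidx_b m r then -1 else 1) * u $ qidx m (qidx_i m r) True (qidx_z m r)) / complex_of_real (sqrt 2)"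
proof -
  define i z where "i = qidx_i m r" and "z = qidx_z m r"
  define c0 c1 where "c0 = qidx m i False z" and "c1 = qidx m i True z"
  have i: "i < n" and z: "z < m" using qidx_decompose[OF r] unfolding i_def z_def by auto
  have c0: "c0 < qdim n m" and c1: "c1 < qdim n m" unfolding c0_def c1_def using qidx_lt[OF i z] by auto
  have "c0 \<noteq> c1" unfolding c0_def c1_def using qidx_eq_iff[OF z z] by simp
  let ?g = "\<lambda>c. hadamard_b n m $$ (r, c) * u $ c"
  have "(hadamard_b n m *\<^sub>v u) $ r = (\<Sum>c<qdim n m. ?g c)"
    by (rule mult_mat_vec_index[OF hadamard_b_carrier u r])
  also have "\<dots> = (\<Sum>c\<in>{c0, c1}. ?g c)"
  proof (rule sum.mono_neutral_right)
    show "\<forall>c\<in>{..<qdim n m} - {c0, c1}. ?g c = 0"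
    proof
      fix c assume c: "c \<in> {..<qdim n m} - {c0, c1}"
      then have cl: "c < qdim n m" by simp
      have "\<not> (qidx_i m r = qidx_i m c \<and> qidx_z m r = qidx_z m c)"
      proof
        assume "qidx_i m r = qidx_i m c \<and> qidx_z m r = qidx_z m c"
        then have "c = qidx m i (qidx_b m c) z" using qidx_decompose(1)[OF cl] unfolding i_def z_def by simp
        then show False using c unfolding c0_def c1_def by (cases "qidx_b m c") auto
      qed
      then show "?g c = 0" unfolding hadamard_b_def using r cl by auto
    qed
  qed (use c0 c1 in auto)
  also have "\<dots> = ?g c0 + ?g c1" using \<open>c0 \<noteq> c1\<close> by simp
  also have "\<dots> = (u $ c0 + (if qidx_b m r then -1 else 1) * u $ c1) / complex_of_real (sqrt 2)"
    unfolding hadamard_b_def using r c0 c1 qidx_components[OF z]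
    by (simp add: c0_def c1_def i_def z_def add_divide_distrib[symmetric])
  finally show ?thesis unfolding c0_def c1_def i_def z_def .
qed

lemma query_op_hadamard_b:
  assumes u: "u \<in> carrier_vec (qdim n m)"
  shows "query_op n m x *\<^sub>v (hadamard_b n m *\<^sub>v u) = hadamard_b n m *\<^sub>v (phase_mat n m x *\<^sub>v u)"
proof (rule eq_vecI)
  fix r assume "r < dim_vec (hadamard_b n m *\<^sub>v (phase_mat n m x *\<^sub>v u))"
  then have r: "r < qdim n m" using hadamard_b_carrier by simp
  define i b z where "i = qidx_i m r" and "b = qidx_b m r" and "z = qidx_z m r"
  have i: "i < n" and z: "z < m" using qidx_decompose[OF r] unfolding i_def z_def by auto
  have c: "qidx m i b' z < qdim n m" for b' using qidx_lt[OF i z] .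
  have Hu: "hadamard_b n m *\<^sub>v u \<in> carrier_vec (qdim n m)" by (rule mult_mat_vec_carrier[OF hadamard_b_carrier u])
  have Du: "phase_mat n m x *\<^sub>v u \<in> carrier_vec (qdim n m)" by (rule mult_mat_vec_carrier[OF phase_mat_carrier u])
  have "(query_op n m x *\<^sub>v (hadamard_b n m *\<^sub>v u)) $ r = (hadamard_b n m *\<^sub>v u) $ query_perm m x r"
    by (rule query_op_vec[OF Hu r])
  also have "\<dots> = (u $ qidx m i False z + (if b \<noteq> x ! i then -1 else 1) * u $ qidx m i True z) / complex_of_real (sqrt 2)"
    unfolding hadamard_b_vec[OF u query_perm_lt[OF r]] query_perm_components[OF r] i_def b_def z_def ..
  also have "\<dots> = ((phase_mat n m x *\<^sub>v u) $ qidx m i False z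
      + (if b then -1 else 1) * (phase_mat n m x *\<^sub>v u) $ qidx m i True z) / complex_of_real (sqrt 2)"
    unfolding phase_mat_vec[OF u c] phase_sign_def qidx_components[OF z] by (cases b; cases "x ! i") simp_all
  also have "\<dots> = (hadamard_b n m *\<^sub>v (phase_mat n m x *\<^sub>v u)) $ r"
    unfolding hadamard_b_vec[OF Du r] i_def b_def z_def ..
  finally show "(query_op n m x *\<^sub>v (hadamard_b n m *\<^sub>v u)) $ r = (hadamard_b n m *\<^sub>v (phase_mat n m x *\<^sub>v u)) $ r" .
qed (simp add: query_op_def)

lemma hadamard_b_involution:
  assumes u: "u \<in> carrier_vec (qdim n m)"
  shows "hadamard_b n m *\<^sub>v (hadamard_b n m *\<^sub>v u) = u"
proof (rule eq_vecI)
  fix r assume "r < dim_vec u"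
  then have r: "r < qdim n m" using u by simp
  define i b z where "i = qidx_i m r" and "b = qidx_b m r" and "z = qidx_z m r"
  have i: "i < n" and z: "z < m" using qidx_decompose[OF r] unfolding i_def z_def by auto
  have r_eq: "r = qidx m i b z" using qidx_decompose(1)[OF r] unfolding i_def b_def z_def .
  have s: "complex_of_real (sqrt 2) * complex_of_real (sqrt 2) = 2"
    by (simp flip: of_real_mult)
  have "(hadamard_b n m *\<^sub>v (hadamard_b n m *\<^sub>v u)) $ r =
      ((u $ qidx m i False z + u $ qidx m i True z) / complex_of_real (sqrt 2)
      + (if b then -1 else 1) * ((u $ qidx m i False z - u $ qidx m i True z) / complex_of_real (sqrt 2)))
      / complex_of_real (sqrt 2)"
    using hadamard_b_vec[OF hadamard_b_carrier[THEN mult_mat_vec_carrier, OF u] r]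
      hadamard_b_vec[OF u qidx_lt[OF i z]] qidx_components[OF z]
    by (simp add: i_def b_def z_def)
  also have "\<dots> = u $ r"
    using s r_eq by (cases b) (simp_all add: field_simps)
  finally show "(hadamard_b n m *\<^sub>v (hadamard_b n m *\<^sub>v u)) $ r = u $ r" .
qed (use u in simp)

lemma hadamard_b_unitary: "unitary (qdim n m) (hadamard_b n m)"
proof -
  have "adjoint (hadamard_b n m) = hadamard_b n m"
    by (rule eq_matI) (auto simp: adjoint_def hadamard_b_def)
  then show ?thesis by (intro unitaryI_vec hadamard_b_carrier) (simp add: hadamard_b_involution)
qed

lemma qrun_conj:
  assumes W: "W \<in> carrier_mat N N" and D: "D \<in> carrier_mat N N"
    and inv: "\<And>v. v \<in> carrier_vec N \<Longrightarrow> W *\<^sub>v (W *\<^sub>v v) = v"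
    and kick: "\<And>v. v \<in> carrier_vec N \<Longrightarrow> Ox *\<^sub>v (W *\<^sub>v v) = W *\<^sub>v (D *\<^sub>v v)"
    and "Ps \<noteq> []" "\<forall>P\<in>set Ps. P \<in> carrier_mat N N" "u \<in> carrier_vec N"
  shows "qrun Ox (map (\<lambda>P. W * P * W) Ps) (W *\<^sub>v u) = W *\<^sub>v qrun D Ps u"
  using assms(5-)
proof (induction Ps arbitrary: u rule: induct_list012)
  have WPW: "W * P * W *\<^sub>v (W *\<^sub>v u) = W *\<^sub>v (P *\<^sub>v u)"
    if "P \<in> carrier_mat N N" "u \<in> carrier_vec N" for P u
    using that W inv[OF that(2)] by (simp add: assoc_mult_mat_vec[of _ N N _ N])
  {
    case (2 P)
    then show ?case using WPW by simp
  next
    case (3 P Q Ps)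
    have P: "P \<in> carrier_mat N N" and Pu: "P *\<^sub>v u \<in> carrier_vec N" using 3 by auto
    have "qrun Ox (map (\<lambda>P. W * P * W) (P # Q # Ps)) (W *\<^sub>v u)
        = qrun Ox (map (\<lambda>P. W * P * W) (Q # Ps)) (W *\<^sub>v (D *\<^sub>v (P *\<^sub>v u)))"
      using WPW[OF P "3.prems"(3)] kick[OF Pu] by simp
    also have "\<dots> = W *\<^sub>v qrun D (Q # Ps) (D *\<^sub>v (P *\<^sub>v u))"
      by (rule "3.IH"(2)) (use "3.prems" D Pu in auto)
    finally show ?case by simp
  }
qed simp

text \<open>The Householder reflection in the hyperplane orthogonal to \<open>w\<close>; for a zero
  vector \<open>w\<close> the junk value of division makes it the identity.\<close>

definition householder :: "nat \<Rightarrow> (nat \<Rightarrow> real) \<Rightarrow> complex mat" where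
  "householder N w = mat N N (\<lambda>(r, c).
     complex_of_real ((if r = c then 1 else 0) - 2 * w r * w c / (\<Sum>j<N. (w j)\<^sup>2)))"

lemma householder_carrier: "householder N w \<in> carrier_mat N N"
  unfolding householder_def by simp

lemma householder_vec:
  assumes u: "u \<in> carrier_vec N" and r: "r < N"
  shows "(householder N w *\<^sub>v u) $ r
    = u $ r - complex_of_real (2 * w r / (\<Sum>j<N. (w j)\<^sup>2)) * (\<Sum>c<N. complex_of_real (w c) * u $ c)"
proof -
  have "(householder N w *\<^sub>v u) $ r = (\<Sum>c<N. (if c = r then 1 else 0) * u $ c
      - complex_of_real (2 * w r / (\<Sum>j<N. (w j)\<^sup>2)) * (complex_of_real (w c) * u $ c))"
    unfolding mult_mat_vec_index[OF householder_carrier u r]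
    by (intro sum.cong refl) (auto simp: householder_def r algebra_simps)
  also have "\<dots> = u $ r - complex_of_real (2 * w r / (\<Sum>j<N. (w j)\<^sup>2)) * (\<Sum>c<N. complex_of_real (w c) * u $ c)"
    unfolding sum_subtractf sum_distrib_left[symmetric] using r by (subst sum_delta_mult) auto
  finally show ?thesis .
qed

lemma householder_involution:
  assumes u: "u \<in> carrier_vec N"
  shows "householder N w *\<^sub>v (householder N w *\<^sub>v u) = u"
proof -
  define s where "s = (\<Sum>j<N. (w j)\<^sup>2)"
  define ip where "ip v = (\<Sum>c<N. complex_of_real (w c) * v $ c)" for v :: "complex vec"
  have H: "(householder N w *\<^sub>v v) $ r = v $ r - complex_of_real (2 * w r / s) * ip v"
    if "v \<in> carrier_vec N" "r < N" for v r
    using householder_vec[OF that] unfolding s_def ip_def .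
  have Hu: "householder N w *\<^sub>v u \<in> carrier_vec N" by (rule mult_mat_vec_carrier[OF householder_carrier u])
  have sum_s: "(\<Sum>c<N. complex_of_real ((w c)\<^sup>2)) = complex_of_real s"
    unfolding s_def of_real_sum ..
  have ipH: "ip (householder N w *\<^sub>v u) = ip u - complex_of_real (2 / s) * complex_of_real s * ip u"
  proof -
    have "ip (householder N w *\<^sub>v u) = (\<Sum>c<N. complex_of_real (w c) * (u $ c - complex_of_real (2 * w c / s) * ip u))"
      unfolding ip_def[of "householder N w *\<^sub>v u"] by (intro sum.cong refl) (simp del: index_mult_mat_vec add: H u)
    also have "\<dots> = ip u - complex_of_real (2 / s) * (\<Sum>c<N. complex_of_real ((w c)\<^sup>2)) * ip u"
      unfolding ip_def[of u] right_diff_distrib sum_subtractf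
      by (simp add: sum_distrib_left sum_distrib_right sum_divide_distrib power2_eq_square mult_ac)
    finally show ?thesis unfolding sum_s .
  qed
  have neg: "ip (householder N w *\<^sub>v u) = - ip u" if "s \<noteq> 0"
  proof -
    have "complex_of_real (2 / s) * complex_of_real s = 2" using that by (simp flip: of_real_mult)
    then show ?thesis unfolding ipH by simp
  qed
  show ?thesis
  proof (rule eq_vecI)
    fix r assume "r < dim_vec u"
    then have r: "r < N" using u by simp
    show "(householder N w *\<^sub>v (householder N w *\<^sub>v u)) $ r = u $ r"
      using H[OF Hu r] H[OF u r] neg by (cases "s = 0") simp_all
  qed (use u in \<open>simp add: householder_def\<close>)
qed

lemma householder_unitary: "unitary N (householder N w)"
proof -
  have "adjoint (householder N w) = householder N w"
    by (rule eq_matI) (auto simp: adjoint_def householder_def mult_ac)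
  then show ?thesis by (intro unitaryI_vec householder_carrier) (simp add: householder_involution)
qed

lemma householder_unit_vec:
  assumes N: "N > 0" and g: "(\<Sum>r<N. (g r)\<^sup>2) = 1" and r: "r < N"
  shows "(householder N (\<lambda>j. (if j = 0 then 1 else 0) - g j) *\<^sub>v unit_vec N 0) $ r = complex_of_real (g r)"
proof -
  define w where "w j = (if j = 0 then 1 else 0) - g j" for j
  define s where "s = (\<Sum>j<N. (w j)\<^sup>2)"
  have "(\<Sum>c<N. complex_of_real (w c) * unit_vec N 0 $ c) = (\<Sum>c<N. (if c = 0 then 1 else 0) * complex_of_real (w c))"
    by (intro sum.cong refl) (auto simp: N)
  then have ip: "(\<Sum>c<N. complex_of_real (w c) * unit_vec N 0 $ c) = complex_of_real (w 0)"
    using N by (simp add: sum_delta_mult)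
  have e: "(householder N w *\<^sub>v unit_vec N 0) $ r = complex_of_real ((if r = 0 then 1 else 0) - 2 * w r / s * w 0)"
    using householder_vec[of "unit_vec N 0" N r w] r ip unfolding s_def by simp
  show ?thesis
  proof (cases "s = 0")
    case True
    then have "w r = 0" using r sum_nonneg_eq_0_iff[of "{..<N}" "\<lambda>j. (w j)\<^sup>2"] unfolding s_def by simp
    then show ?thesis using e True unfolding w_def by simp
  next
    case False
    have "s = (\<Sum>j<N. (if j = 0 then 1 else 0) * (1 - 2 * g j) + (g j)\<^sup>2)"
      unfolding s_def w_def by (intro sum.cong refl) (auto simp: power2_eq_square algebra_simps)
    also have "\<dots> = 2 * w 0" using N g unfolding w_def by (simp add: sum.distrib sum_delta_mult)
    finally have "2 * w r / s * w 0 = w r" using False by simp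
    then show ?thesis using e unfolding w_def by simp
  qed
qed

lemma ex_perm_extending:
  fixes F G :: "'b \<Rightarrow> nat"
  assumes fin: "finite B" and F: "inj_on F B" "F ` B \<subseteq> {0..<N}" and G: "inj_on G B" "G ` B \<subseteq> {0..<N}"
  shows "\<exists>\<pi>. bij_betw \<pi> {0..<N} {0..<N} \<and> (\<forall>\<beta>\<in>B. \<pi> (G \<beta>) = F \<beta>)"
proof -
  define h1 where "h1 = F \<circ> the_inv_into B G"
  have b1: "bij_betw h1 (G ` B) (F ` B)"
  proof -
    have "bij_betw (the_inv_into B G) (G ` B) B" by (rule bij_betw_the_inv_into) (simp add: bij_betw_imageI G)
    moreover have "bij_betw F B (F ` B)" by (simp add: bij_betw_imageI F)
    ultimately show ?thesis unfolding h1_def by (rule bij_betw_trans)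
  qed
  have "card ({0..<N} - G ` B) = card ({0..<N} - F ` B)"
    using F G card_image[OF F(1)] card_image[OF G(1)] fin by (simp add: card_Diff_subset finite_subset)
  then obtain h2 where b2: "bij_betw h2 ({0..<N} - G ` B) ({0..<N} - F ` B)"
    using finite_same_card_bij[of "{0..<N} - G ` B" "{0..<N} - F ` B"] by auto
  define \<pi> where "\<pi> r = (if r \<in> G ` B then h1 r else h2 r)" for r
  have "bij_betw \<pi> (G ` B \<union> ({0..<N} - G ` B)) (F ` B \<union> ({0..<N} - F ` B))"
  proof (rule bij_betw_combine)
    show "bij_betw \<pi> (G ` B) (F ` B)"
      using b1 by (rule bij_betw_cong[THEN iffD1, rotated]) (simp add: \<pi>_def)
    show "bij_betw \<pi> ({0..<N} - G ` B) ({0..<N} - F ` B)"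
      using b2 by (rule bij_betw_cong[THEN iffD1, rotated]) (simp add: \<pi>_def)
  qed auto
  moreover have "G ` B \<union> ({0..<N} - G ` B) = {0..<N}" "F ` B \<union> ({0..<N} - F ` B) = {0..<N}"
    using F G by auto
  ultimately have "bij_betw \<pi> {0..<N} {0..<N}" by simp
  moreover have "\<forall>\<beta>\<in>B. \<pi> (G \<beta>) = F \<beta>"
    unfolding \<pi>_def h1_def using the_inv_into_f_f[OF G(1)] by simp
  ultimately show ?thesis by blast
qed

lemma sum_if_inj_eq:
  assumes "finite B" "inj_on p B" "\<beta>0 \<in> B"
  shows "(\<Sum>\<beta>\<in>B. if p \<beta>0 = p \<beta> then h \<beta> else 0) = h \<beta>0"
proof -
  have "(\<Sum>\<beta>\<in>B. if p \<beta>0 = p \<beta> then h \<beta> else 0) = (\<Sum>\<beta>\<in>B. if \<beta> = \<beta>0 then h \<beta> else 0)"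
    using assms(2,3) by (intro sum.cong refl) (auto dest: inj_onD)
  then show ?thesis using assms(1,3) by simp
qed

lemma sum_if_inj_power2:
  fixes p :: "'b \<Rightarrow> 'c" and h :: "'b \<Rightarrow> real"
  assumes "finite B" "inj_on p B"
  shows "(\<Sum>\<beta>\<in>B. if r = p \<beta> then h \<beta> else (0::real))\<^sup>2 = (\<Sum>\<beta>\<in>B. if r = p \<beta> then (h \<beta>)\<^sup>2 else 0)"
proof (cases "\<exists>\<beta>\<in>B. r = p \<beta>")
  case True
  then obtain \<beta>0 where "\<beta>0 \<in> B" "r = p \<beta>0" by blast
  then show ?thesis
    using sum_if_inj_eq[OF assms, of \<beta>0 h] sum_if_inj_eq[OF assms, of \<beta>0 "\<lambda>\<beta>. (h \<beta>)\<^sup>2"] by simp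
qed (auto intro!: sum.neutral)

lemma sum_sum_if_eq:
  fixes N :: nat and p :: "'b \<Rightarrow> nat" and h :: "'b \<Rightarrow> real"
  assumes "finite B" "p ` B \<subseteq> {..<N}"
  shows "(\<Sum>r<N. \<Sum>\<beta>\<in>B. if r = p \<beta> then h \<beta> else 0) = (\<Sum>\<beta>\<in>B. h \<beta>)"
proof -
  have "(\<Sum>r<N. \<Sum>\<beta>\<in>B. if r = p \<beta> then h \<beta> else 0) = (\<Sum>\<beta>\<in>B. \<Sum>r<N. if r = p \<beta> then h \<beta> else 0)"
    by (rule sum.swap)
  also have "\<dots> = (\<Sum>\<beta>\<in>B. h \<beta>)"
  proof (intro sum.cong refl)
    fix \<beta> assume "\<beta> \<in> B"
    then have "p \<beta> \<in> {..<N}" using assms(2) by auto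
    then show "(\<Sum>r<N. if r = p \<beta> then h \<beta> else 0) = h \<beta>"
      using sum.delta[of "{..<N}" "p \<beta>" "\<lambda>_. h \<beta>"] by simp
  qed
  finally show ?thesis .
qed

section \<open>Fourier expansion on the cube\<close>

definition parity :: "nat set \<Rightarrow> bool list \<Rightarrow> real" where
  "parity S x = (\<Prod>i\<in>S. if x ! i then -1 else 1)"

lemma prod_bit_fourier:
  assumes T: "finite T"
  shows "(\<Prod>i\<in>T. bit (x ! i)) = (\<Sum>U\<in>Pow T. ((-1/2) ^ card U * (1/2) ^ card (T - U)) * parity U x)"
proof -
  have "(\<Prod>i\<in>T. bit (x ! i)) = (\<Prod>i\<in>T. (-1/2) * (if x ! i then -1 else 1) + 1/2)"
    by (intro prod.cong refl) (simp add: bit_def)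
  also have "\<dots> = (\<Sum>U\<in>Pow T. (\<Prod>i\<in>U. (-1/2) * (if x ! i then -1 else 1)) * (\<Prod>i\<in>T - U. 1/2))"
    by (rule prod_add[OF T])
  also have "\<dots> = (\<Sum>U\<in>Pow T. ((-1/2) ^ card U * (1/2) ^ card (T - U)) * parity U x)"
    unfolding parity_def by (intro sum.cong refl) (simp only: prod.distrib prod_constant mult_ac)
  finally show ?thesis .
qed

lemma cube_poly_fourier:
  assumes "cube_poly n d g"
  shows "\<exists>a. mpoly_deg_le n a d \<and> (\<forall>x\<in>cube n. g x = (\<Sum>S\<in>Pow {0..<n}. a S * parity S x))"
proof -
  obtain c where c: "mpoly_deg_le n c d" "\<forall>x\<in>cube n. g x = mpoly_eval n c x"
    using assms unfolding cube_poly_def by blast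
  define P where "P = Pow {0..<n}"
  have finP: "finite P" and finT: "\<And>T. T \<in> P \<Longrightarrow> finite T"
    unfolding P_def by (auto intro: finite_subset)
  define w where "w T U = ((-1/2::real) ^ card U * (1/2) ^ card (T - U))" for T U :: "nat set"
  define a where "a U = (\<Sum>T\<in>{T\<in>P. U \<subseteq> T}. c T * w T U)" for U
  have "mpoly_deg_le n a d"
    unfolding mpoly_deg_le_def
  proof (intro ballI impI)
    fix S assume S: "S \<in> Pow {0..<n}" "a S \<noteq> 0"
    then obtain T where T: "T \<in> P" "S \<subseteq> T" "c T * w T S \<noteq> 0"
      unfolding a_def using sum.neutral by (smt (verit, del_insts) mem_Collect_eq)
    then have "card T \<le> d" using c(1) unfolding mpoly_deg_le_def P_def by auto
    moreover have "card S \<le> card T" using T finT by (simp add: card_mono)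
    ultimately show "card S \<le> d" by simp
  qed
  moreover have "g x = (\<Sum>S\<in>Pow {0..<n}. a S * parity S x)" if x: "x \<in> cube n" for x
  proof -
    have pw: "T \<in> P \<Longrightarrow> Pow T = {U \<in> P. U \<subseteq> T}" for T unfolding P_def by auto
    have "g x = (\<Sum>T\<in>P. c T * (\<Prod>i\<in>T. bit (x ! i)))" using c(2) x unfolding mpoly_eval_def P_def by simp
    also have "\<dots> = (\<Sum>T\<in>P. \<Sum>U\<in>{U\<in>P. U \<subseteq> T}. c T * w T U * parity U x)"
      by (intro sum.cong refl) (simp add: prod_bit_fourier finT pw sum_distrib_left w_def mult.assoc)
    also have "\<dots> = (\<Sum>U\<in>P. \<Sum>T\<in>{T\<in>P. U \<subseteq> T}. c T * w T U * parity U x)"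
      by (rule sum.swap_restrict[OF finP finP])
    also have "\<dots> = (\<Sum>U\<in>P. a U * parity U x)"
      unfolding a_def by (simp add: sum_distrib_right)
    finally show ?thesis unfolding P_def .
  qed
  ultimately show ?thesis by blast
qed

section \<open>A quantum algorithm from a Fourier expansion\<close>

text \<open>Let \<open>e\<close> enumerate the subsets \<open>S = e j\<close> of \<open>{0..<n}\<close>, each of size at most \<open>2k\<close>
  where \<open>a S \<noteq> 0\<close>. Every \<open>S\<close> gives two branches \<open>(j, s)\<close>, one for the first and one for
  the second half of \<open>S\<close> (at most \<open>k\<close> variables each), living in the workspace register
  \<open>2 j + s\<close>. Starting from \<open>\<Sum>\<beta>. amp0 \<beta> |pos \<beta> 0\<rangle>\<close>, step \<open>t\<close> applies the phase oracle,
  which multiplies each branch by \<open>(-1)^x_i\<close> for its \<open>t\<close>-th variable \<open>i\<close> (a branch that has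
  run out of variables sits at \<open>b = 0\<close>, where the oracle acts trivially), and then a
  permutation moves each branch on to its next position. Finally the two halves of \<open>S\<close>
  sit at \<open>|0,0,2j\<rangle>\<close> and \<open>|0,1,2j\<rangle>\<close>; a Hadamard gate on \<open>b\<close> makes them interfere, and
  \<open>|0,0,2j\<rangle>\<close> is observed with probability \<open>(|a S| + a S parity S x) / (2 l1)\<close>.\<close>

locale fourier_alg =
  fixes n k :: nat and a :: "nat set \<Rightarrow> real" and e :: "nat \<Rightarrow> nat set" and M :: nat
  assumes n: "n \<ge> 1" and k: "k \<ge> 1" and e: "bij_betw e {0..<M} (Pow {0..<n})"
    and deg: "mpoly_deg_le n a (2 * k)" and sum_abs_pos: "0 < (\<Sum>S\<in>Pow {0..<n}. \<bar>a S\<bar>)"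
begin

definition ws :: nat where "ws = 2 * M"
definition dim :: nat where "dim = qdim n ws"
definition l1 :: real where "l1 = (\<Sum>S\<in>Pow {0..<n}. \<bar>a S\<bar>)"
definition vars :: "nat \<Rightarrow> nat list" where "vars j = sorted_list_of_set (e j)"
definition half_vars :: "nat \<Rightarrow> bool \<Rightarrow> nat list" where
  "half_vars j s = take k (if s then drop k (vars j) else vars j)"
definition reg :: "nat \<Rightarrow> bool \<Rightarrow> nat" where "reg j s = 2 * j + (if s then 1 else 0)"
definition branches :: "(nat \<times> bool) set" where "branches = {0..<M} \<times> UNIV"

definition pos :: "nat \<times> bool \<Rightarrow> nat \<Rightarrow> nat" where
  "pos \<beta> t = (if t < k
     then (if t < length (half_vars (fst \<beta>) (snd \<beta>))
           then qidx ws (half_vars (fst \<beta>) (snd \<beta>) ! t) True (reg (fst \<beta>) (snd \<beta>))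
           else qidx ws 0 False (reg (fst \<beta>) (snd \<beta>)))
     else qidx ws 0 (snd \<beta>) (2 * fst \<beta>))"

definition amp0 :: "nat \<times> bool \<Rightarrow> real" where
  "amp0 \<beta> = (if snd \<beta> then sgn (a (e (fst \<beta>))) else 1) * sqrt (\<bar>a (e (fst \<beta>))\<bar> / (2 * l1))"

definition phase :: "bool list \<Rightarrow> nat \<times> bool \<Rightarrow> nat \<Rightarrow> real" where
  "phase x \<beta> t = (\<Prod>t'<t. phase_sign ws x (pos \<beta> t'))"

definition amp :: "bool list \<Rightarrow> nat \<Rightarrow> nat \<Rightarrow> real" where
  "amp x t r = (\<Sum>\<beta>\<in>branches. if r = pos \<beta> t then amp0 \<beta> * phase x \<beta> t else 0)"

definition state :: "bool list \<Rightarrow> nat \<Rightarrow> complex vec" where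
  "state x t = vec dim (\<lambda>r. complex_of_real (amp x t r))"

definition init :: "nat \<Rightarrow> real" where
  "init r = (\<Sum>\<beta>\<in>branches. if r = pos \<beta> 0 then amp0 \<beta> else 0)"

definition shift_perm :: "nat \<Rightarrow> nat \<Rightarrow> nat" where
  "shift_perm t = (SOME \<pi>. bij_betw \<pi> {0..<dim} {0..<dim} \<and> (\<forall>\<beta>\<in>branches. \<pi> (pos \<beta> t) = pos \<beta> (t - 1)))"

definition shift :: "nat \<Rightarrow> complex mat" where
  "shift t = perm_mat dim (shift_perm t)"

definition unitaries :: "complex mat list" where
  "unitaries = (hadamard_b n ws * householder dim (\<lambda>j. (if j = 0 then 1 else 0) - init j))
     # map (\<lambda>t. hadamard_b n ws * shift t * hadamard_b n ws) [1..<Suc k]"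

definition accepting :: "nat set" where "accepting = (\<lambda>j. 2 * j) ` {0..<M}"

lemma ws_pos: "ws \<ge> 1"
proof -
  have "M = card (Pow {0..<n})" using bij_betw_same_card[OF e] by simp
  then show ?thesis unfolding ws_def by (simp add: card_Pow)
qed

lemma dim_pos: "dim > 0" unfolding dim_def qdim_def using n ws_pos by simp

lemma l1_gt_0: "l1 > 0" unfolding l1_def using sum_abs_pos .

lemma finite_branches: "finite branches" unfolding branches_def by simp

lemma e_subset: "j < M \<Longrightarrow> e j \<subseteq> {0..<n}" using e bij_betwE by fastforce

lemma finite_e: "j < M \<Longrightarrow> finite (e j)" using e_subset finite_subset by blast

lemma half_vars_lt: "j < M \<Longrightarrow> i \<in> set (half_vars j s) \<Longrightarrow> i < n"
proof -
  assume j: "j < M" and i: "i \<in> set (half_vars j s)"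
  have "set (half_vars j s) \<subseteq> set (vars j)" unfolding half_vars_def by (auto dest: in_set_takeD in_set_dropD)
  then show "i < n" using i e_subset[OF j] finite_e[OF j] unfolding vars_def by auto
qed

lemma reg_lt: "j < M \<Longrightarrow> reg j s < ws" unfolding reg_def ws_def by auto

lemma reg_inj: "reg j s = reg j' s' \<Longrightarrow> j = j' \<and> s = s'" unfolding reg_def by (cases s; cases s') presburger+

lemma pos_lt: "\<beta> \<in> branches \<Longrightarrow> pos \<beta> t < dim"
proof -
  assume "\<beta> \<in> branches"
  then have j: "fst \<beta> < M" unfolding branches_def by auto
  have "t < length (half_vars (fst \<beta>) (snd \<beta>)) \<Longrightarrow> half_vars (fst \<beta>) (snd \<beta>) ! t < n"
    using half_vars_lt[OF j] nth_mem by blast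
  moreover have "2 * fst \<beta> < ws" using j unfolding ws_def by simp
  ultimately show ?thesis unfolding pos_def dim_def using qidx_lt[OF _ reg_lt[OF j]] qidx_lt[of 0 n] n by auto
qed

lemma pos_components:
  assumes b: "\<beta> \<in> branches" and t: "t < k"
  shows "qidx_i ws (pos \<beta> t) = (if t < length (half_vars (fst \<beta>) (snd \<beta>)) then half_vars (fst \<beta>) (snd \<beta>) ! t else 0)"
    "qidx_b ws (pos \<beta> t) = (t < length (half_vars (fst \<beta>) (snd \<beta>)))"
    "qidx_z ws (pos \<beta> t) = reg (fst \<beta>) (snd \<beta>)"
proof -
  have j: "fst \<beta> < M" using b unfolding branches_def by auto
  note c = qidx_components[OF reg_lt[OF j]]
  show "qidx_i ws (pos \<beta> t) = (if t < length (half_vars (fst \<beta>) (snd \<beta>)) then half_vars (fst \<beta>) (snd \<beta>) ! t else 0)"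
    "qidx_b ws (pos \<beta> t) = (t < length (half_vars (fst \<beta>) (snd \<beta>)))"
    "qidx_z ws (pos \<beta> t) = reg (fst \<beta>) (snd \<beta>)"
    unfolding pos_def using t c by simp_all
qed

lemma pos_last: "pos \<beta> k = qidx ws 0 (snd \<beta>) (2 * fst \<beta>)" unfolding pos_def by simp

lemma pos_inj: "t \<le> k \<Longrightarrow> inj_on (\<lambda>\<beta>. pos \<beta> t) branches"
proof (rule inj_onI)
  fix \<beta> \<beta>' assume t: "t \<le> k" and b: "\<beta> \<in> branches" "\<beta>' \<in> branches" and eq: "pos \<beta> t = pos \<beta>' t"
  show "\<beta> = \<beta>'"
  proof (cases "t < k")
    case True
    have "reg (fst \<beta>) (snd \<beta>) = reg (fst \<beta>') (snd \<beta>')"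
      using pos_components(3)[OF b(1) True] pos_components(3)[OF b(2) True] eq by simp
    then show ?thesis using reg_inj by (simp add: prod_eq_iff)
  next
    case False
    then have "t = k" using t by simp
    moreover have "2 * fst \<beta> < ws" "2 * fst \<beta>' < ws" using b unfolding branches_def ws_def by auto
    ultimately have "snd \<beta> = snd \<beta>' \<and> 2 * fst \<beta> = 2 * fst \<beta>'"
      using eq by (simp add: pos_last qidx_eq_iff)
    then show ?thesis by (simp add: prod_eq_iff)
  qed
qed

lemma sum_branches: "(\<Sum>\<beta>\<in>branches. h \<beta>) = (\<Sum>j<M. h (j, False) + h (j, True))"
  unfolding branches_def sum.cartesian_product' by (simp add: UNIV_bool atLeast0LessThan)

lemma sum_enum: "(\<Sum>j<M. h (e j)) = (\<Sum>S\<in>Pow {0..<n}. h S)"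
  using sum.reindex_bij_betw[OF e, of h] by (simp add: atLeast0LessThan)

lemma sum_amp0_power2: "(\<Sum>\<beta>\<in>branches. (amp0 \<beta>)\<^sup>2) = 1"
proof -
  have sq: "(sqrt (\<bar>a S\<bar> / (2 * l1)))\<^sup>2 = \<bar>a S\<bar> / (2 * l1)" for S using l1_gt_0 by simp
  have sgn: "\<bar>a S\<bar> * (sgn (a S))\<^sup>2 = \<bar>a S\<bar>" for S by (cases "a S = 0") (auto simp: sgn_if)
  have "(amp0 (j, False))\<^sup>2 + (amp0 (j, True))\<^sup>2 = \<bar>a (e j)\<bar> / l1" for j
    unfolding amp0_def power_mult_distrib sq by (simp add: sgn field_simps)
  then have "(\<Sum>\<beta>\<in>branches. (amp0 \<beta>)\<^sup>2) = (\<Sum>S\<in>Pow {0..<n}. \<bar>a S\<bar>) / l1"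
    unfolding sum_branches using sum_enum[of "\<lambda>S. \<bar>a S\<bar> / l1"] by (simp add: sum_divide_distrib)
  then show ?thesis using l1_gt_0 unfolding l1_def by simp
qed

lemma shift_perm_spec:
  assumes "t \<le> k"
  shows "bij_betw (shift_perm t) {0..<dim} {0..<dim}" "\<forall>\<beta>\<in>branches. shift_perm t (pos \<beta> t) = pos \<beta> (t - 1)"
proof -
  have "\<exists>\<pi>. bij_betw \<pi> {0..<dim} {0..<dim} \<and> (\<forall>\<beta>\<in>branches. \<pi> (pos \<beta> t) = pos \<beta> (t - 1))"
    by (rule ex_perm_extending[OF finite_branches pos_inj _ pos_inj]) (use assms pos_lt in auto)
  then have "bij_betw (shift_perm t) {0..<dim} {0..<dim} \<and> (\<forall>\<beta>\<in>branches. shift_perm t (pos \<beta> t) = pos \<beta> (t - 1))"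
    unfolding shift_perm_def by (rule someI_ex)
  then show "bij_betw (shift_perm t) {0..<dim} {0..<dim}" "\<forall>\<beta>\<in>branches. shift_perm t (pos \<beta> t) = pos \<beta> (t - 1)"
    by simp_all
qed

lemma phase_0 [simp]: "phase x \<beta> 0 = 1"
  unfolding phase_def by simp

lemma amp_0: "amp x 0 r = init r"
  unfolding amp_def init_def phase_0 mult_1_right ..

lemma state_carrier: "state x t \<in> carrier_vec dim" unfolding state_def by simp

lemma state_step:
  assumes t: "t < k"
  shows "shift (Suc t) *\<^sub>v (phase_mat n ws x *\<^sub>v state x t) = state x (Suc t)"
proof (rule eq_vecI)
  fix r assume "r < dim_vec (state x (Suc t))"
  then have r: "r < dim" unfolding state_def by simp
  note \<pi> = shift_perm_spec[of "Suc t"]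
  define r' where "r' = shift_perm (Suc t) r"
  have r': "r' < dim" unfolding r'_def using \<pi>(1) t r bij_betwE by fastforce
  have "phase_mat n ws x *\<^sub>v state x t \<in> carrier_vec dim"
    using phase_mat_carrier state_carrier unfolding dim_def by (rule mult_mat_vec_carrier)
  then have "(shift (Suc t) *\<^sub>v (phase_mat n ws x *\<^sub>v state x t)) $ r = (phase_mat n ws x *\<^sub>v state x t) $ r'"
    unfolding shift_def r'_def using r' r by (intro perm_mat_vec) (simp_all add: r'_def)
  also have "\<dots> = complex_of_real (phase_sign ws x r' * amp x t r')"
    using phase_mat_vec[of "state x t" n ws r' x] state_carrier r' by (simp add: dim_def state_def)
  also have "phase_sign ws x r' * amp x t r' = amp x (Suc t) r"
    unfolding amp_def sum_distrib_left
  proof (intro sum.cong refl)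
    fix \<beta> assume b: "\<beta> \<in> branches"
    have "r' = pos \<beta> t \<longleftrightarrow> r = pos \<beta> (Suc t)"
    proof
      assume "r = pos \<beta> (Suc t)" then show "r' = pos \<beta> t" unfolding r'_def using \<pi>(2) t b by simp
    next
      assume "r' = pos \<beta> t"
      then have "shift_perm (Suc t) r = shift_perm (Suc t) (pos \<beta> (Suc t))" using \<pi>(2) t b unfolding r'_def by simp
      then show "r = pos \<beta> (Suc t)"
        using bij_betw_imp_inj_on[OF \<pi>(1)] t r pos_lt[OF b] by (auto dest: inj_onD)
    qed
    then show "phase_sign ws x r' * (if r' = pos \<beta> t then amp0 \<beta> * phase x \<beta> t else 0) =
          (if r = pos \<beta> (Suc t) then amp0 \<beta> * phase x \<beta> (Suc t) else 0)"
      by (auto simp: phase_def)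
  qed
  finally show "(shift (Suc t) *\<^sub>v (phase_mat n ws x *\<^sub>v state x t)) $ r = state x (Suc t) $ r"
    using r unfolding state_def by simp
qed (simp add: state_def shift_def perm_mat_def)

lemma state_zero: "state x 0 = householder dim (\<lambda>j. (if j = 0 then 1 else 0) - init j) *\<^sub>v unit_vec dim 0"
proof -
  have "(\<Sum>r<dim. (init r)\<^sup>2) = (\<Sum>r<dim. \<Sum>\<beta>\<in>branches. if r = pos \<beta> 0 then (amp0 \<beta>)\<^sup>2 else 0)"
    unfolding init_def by (intro sum.cong refl sum_if_inj_power2 finite_branches pos_inj) simp
  also have "\<dots> = 1"
  proof -
    have "(\<lambda>\<beta>. pos \<beta> 0) ` branches \<subseteq> {..<dim}" using pos_lt by auto
    then show ?thesis using sum_sum_if_eq[OF finite_branches] sum_amp0_power2 by simp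
  qed
  finally have norm: "(\<Sum>r<dim. (init r)\<^sup>2) = 1" .
  show ?thesis
  proof (rule eq_vecI)
    fix r assume "r < dim_vec (householder dim (\<lambda>j. (if j = 0 then 1 else 0) - init j) *\<^sub>v unit_vec dim 0)"
    then have r: "r < dim" by (simp add: householder_def)
    show "state x 0 $ r = (householder dim (\<lambda>j. (if j = 0 then 1 else 0) - init j) *\<^sub>v unit_vec dim 0) $ r"
      unfolding householder_unit_vec[OF dim_pos norm r] using r by (simp add: state_def amp_0)
  qed (simp add: state_def householder_def)
qed

lemma qrun_phase_state:
  "t < k \<Longrightarrow> qrun (phase_mat n ws x) (map shift [Suc t..<Suc k]) (phase_mat n ws x *\<^sub>v state x t) = state x k"
proof (induction "k - Suc t" arbitrary: t)
  case 0
  then have "Suc t = k" by simp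
  then show ?case using state_step[OF "0.prems"] by simp
next
  case (Suc d)
  have "[Suc t..<Suc k] = Suc t # [Suc (Suc t)..<Suc k]"
    by (rule upt_conv_Cons) (use Suc(3) in simp)
  moreover have "[Suc (Suc t)..<Suc k] = Suc (Suc t) # [Suc (Suc (Suc t))..<Suc k]"
    by (rule upt_conv_Cons) (use Suc(2,3) in simp)
  ultimately have "qrun (phase_mat n ws x) (map shift [Suc t..<Suc k]) (phase_mat n ws x *\<^sub>v state x t)
      = qrun (phase_mat n ws x) (map shift [Suc (Suc t)..<Suc k]) (phase_mat n ws x *\<^sub>v state x (Suc t))"
    using state_step[OF Suc(3)] by (simp del: upt_Suc)
  also have "\<dots> = state x k" using Suc(1)[of "Suc t"] Suc(2,3) by (simp del: upt_Suc)
  finally show ?case .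
qed

lemma length_unitaries: "length unitaries = k + 1" unfolding unitaries_def by simp

lemma unitaries_unitary: "\<forall>U\<in>set unitaries. unitary (qdim n ws) U"
proof -
  have "unitary (qdim n ws) (shift t)" if "t \<in> set [1..<Suc k]" for t
    unfolding shift_def dim_def using shift_perm_spec(1)[of t] that perm_mat_unitary dim_def by auto
  then show ?thesis unfolding unitaries_def dim_def
    by (auto intro!: unitary_mult hadamard_b_unitary householder_unitary)
qed

lemma qrun_unitaries: "qrun (query_op n ws x) unitaries (unit_vec dim 0) = hadamard_b n ws *\<^sub>v state x k"
proof -
  let ?H = "householder dim (\<lambda>j. (if j = 0 then 1 else 0) - init j)"
  have ks: "[1..<Suc k] = Suc 0 # [Suc 1..<Suc k]" using k by (simp add: upt_conv_Cons)
  have "hadamard_b n ws * ?H *\<^sub>v unit_vec dim 0 = hadamard_b n ws *\<^sub>v state x 0"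
    unfolding state_zero dim_def by (rule assoc_mult_mat_vec[OF hadamard_b_carrier householder_carrier]) simp
  then have "query_op n ws x *\<^sub>v (hadamard_b n ws * ?H *\<^sub>v unit_vec dim 0)
      = hadamard_b n ws *\<^sub>v (phase_mat n ws x *\<^sub>v state x 0)"
    using query_op_hadamard_b state_carrier unfolding dim_def by simp
  then have "qrun (query_op n ws x) unitaries (unit_vec dim 0)
      = qrun (query_op n ws x) (map (\<lambda>P. hadamard_b n ws * P * hadamard_b n ws) (map shift [1..<Suc k]))
          (hadamard_b n ws *\<^sub>v (phase_mat n ws x *\<^sub>v state x 0))"
    unfolding unitaries_def ks by (simp del: upt_Suc add: comp_def)
  also have "\<dots> = hadamard_b n ws *\<^sub>v qrun (phase_mat n ws x) (map shift [1..<Suc k]) (phase_mat n ws x *\<^sub>v state x 0)"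
    using k state_carrier[of x 0] unfolding dim_def
    by (intro qrun_conj hadamard_b_carrier phase_mat_carrier hadamard_b_involution query_op_hadamard_b)
      (auto simp: shift_def perm_mat_carrier dim_def intro: phase_mat_carrier mult_mat_vec_carrier)
  also have "\<dots> = hadamard_b n ws *\<^sub>v state x k" using qrun_phase_state[of 0] k by simp
  finally show ?thesis .
qed

lemma phase_last:
  assumes b: "\<beta> \<in> branches"
  shows "phase x \<beta> k = (\<Prod>i\<leftarrow>half_vars (fst \<beta>) (snd \<beta>). if x ! i then -1 else 1)"
proof -
  let ?vs = "half_vars (fst \<beta>) (snd \<beta>)"
  have "phase x \<beta> k = (\<Prod>t<k. if t < length ?vs then (if x ! (?vs ! t) then -1 else 1) else 1)"
    unfolding phase_def by (rule prod.cong) (auto simp: phase_sign_def pos_components[OF b])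
  also have "\<dots> = (\<Prod>t<length ?vs. if t < length ?vs then (if x ! (?vs ! t) then -1 else 1) else 1)"
    by (rule prod.mono_neutral_right) (auto simp: half_vars_def)
  also have "\<dots> = (\<Prod>t<length ?vs. if x ! (?vs ! t) then -1 else 1)"
    by (rule prod.cong) auto
  finally show ?thesis by (simp add: prod.list_conv_set_nth atLeast0LessThan)
qed

lemma phase_last_power2: "\<beta> \<in> branches \<Longrightarrow> (phase x \<beta> k)\<^sup>2 = 1"
proof -
  have "(\<Prod>i\<leftarrow>is. if x ! i then -1 else 1)\<^sup>2 = (1::real)" for "is"
    by (induction "is") (auto simp: power_mult_distrib)
  then show "\<beta> \<in> branches \<Longrightarrow> (phase x \<beta> k)\<^sup>2 = 1" by (simp add: phase_last)
qed

text \<open>The two halves of a set of size at most \<open>2 k\<close> together contain all of its variables.\<close>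

lemma phase_last_mult:
  assumes j: "j < M" and a: "a (e j) \<noteq> 0"
  shows "phase x (j, False) k * phase x (j, True) k = parity (e j) x"
proof -
  have "(j, False) \<in> branches" "(j, True) \<in> branches" using j unfolding branches_def by auto
  moreover have "length (vars j) \<le> 2 * k"
    using deg e_subset[OF j] finite_e[OF j] a unfolding vars_def mpoly_deg_le_def by auto
  then have "half_vars j False = take k (vars j)" "half_vars j True = drop k (vars j)"
    unfolding half_vars_def by simp_all
  ultimately have "phase x (j, False) k * phase x (j, True) k
      = (\<Prod>i\<leftarrow>take k (vars j). if x ! i then -1 else 1) * (\<Prod>i\<leftarrow>drop k (vars j). if x ! i then -1 else 1)"
    by (simp add: phase_last)
  also have "\<dots> = (\<Prod>i\<leftarrow>vars j. if x ! i then -1 else 1)"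
    by (metis append_take_drop_id map_append prod_list.append)
  also have "\<dots> = parity (e j) x"
  proof -
    have "distinct (vars j)" "set (vars j) = e j" using finite_e[OF j] unfolding vars_def by simp_all
    then show ?thesis unfolding parity_def by (metis prod.distinct_set_conv_list)
  qed
  finally show ?thesis .
qed

lemma accepting_subset: "accepting \<subseteq> {0..<dim}"
proof -
  have "qidx ws 0 False (2 * j) < dim" if "j < M" for j
    unfolding dim_def by (rule qidx_lt) (use n that in \<open>auto simp: ws_def\<close>)
  then show ?thesis unfolding accepting_def by (auto simp: qidx_def)
qed

lemma final_amp:
  assumes j: "j < M"
  shows "(hadamard_b n ws *\<^sub>v state x k) $ (2 * j) =
    complex_of_real ((amp0 (j, False) * phase x (j, False) k + amp0 (j, True) * phase x (j, True) k) / sqrt 2)"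
proof -
  have z: "2 * j < ws" using j unfolding ws_def by simp
  have r: "qidx ws 0 False (2 * j) = 2 * j" by (simp add: qidx_def)
  have c: "qidx_i ws (2 * j) = 0" "\<not> qidx_b ws (2 * j)" "qidx_z ws (2 * j) = 2 * j"
    using qidx_components[OF z, of 0 False] unfolding r by simp_all
  have "2 * j < qdim n ws" using qidx_lt[of 0 n "2 * j" ws False] n z r by simp
  then have "(hadamard_b n ws *\<^sub>v state x k) $ (2 * j)
      = (state x k $ pos (j, False) k + state x k $ pos (j, True) k) / complex_of_real (sqrt 2)"
    using hadamard_b_vec[of "state x k" n ws "2 * j"] state_carrier c unfolding dim_def pos_last by simp
  moreover have "state x k $ pos \<beta> k = complex_of_real (amp0 \<beta> * phase x \<beta> k)" if "\<beta> \<in> branches" for \<beta>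
  proof -
    have "amp x k (pos \<beta> k) = amp0 \<beta> * phase x \<beta> k"
      unfolding amp_def
      using sum_if_inj_eq[OF finite_branches pos_inj[OF order_refl] that, of "\<lambda>\<beta>'. amp0 \<beta>' * phase x \<beta>' k"]
      by simp
    then show ?thesis using pos_lt[OF that, of k] unfolding state_def by simp
  qed
  moreover have "(j, False) \<in> branches" "(j, True) \<in> branches" using j unfolding branches_def by auto
  ultimately show ?thesis by (simp add: add_divide_distrib)
qed

lemma final_prob:
  assumes j: "j < M"
  shows "((amp0 (j, False) * phase x (j, False) k + amp0 (j, True) * phase x (j, True) k) / sqrt 2)\<^sup>2
        = \<bar>a (e j)\<bar> / (2 * l1) + a (e j) * parity (e j) x / (2 * l1)"
proof (cases "a (e j) = 0")
  case True
  then show ?thesis unfolding amp0_def by simp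
next
  case False
  have b: "(j, False) \<in> branches" "(j, True) \<in> branches" using j unfolding branches_def by auto
  define s g u v where "s = sqrt (\<bar>a (e j)\<bar> / (2 * l1))" and "g = sgn (a (e j))"
    and "u = phase x (j, False) k" and "v = phase x (j, True) k"
  have s2: "s\<^sup>2 = \<bar>a (e j)\<bar> / (2 * l1)" unfolding s_def using l1_gt_0 by simp
  have g2: "g\<^sup>2 = 1" unfolding g_def using False by (auto simp: sgn_if)
  have u2: "u\<^sup>2 = 1" and v2: "v\<^sup>2 = 1" unfolding u_def v_def using phase_last_power2 b by auto
  have uv: "u * v = parity (e j) x" unfolding u_def v_def by (rule phase_last_mult[OF j False])
  have "amp0 (j, False) = s" "amp0 (j, True) = g * s" unfolding amp0_def s_def g_def by simp_all
  then have "((amp0 (j, False) * u + amp0 (j, True) * v) / sqrt 2)\<^sup>2 = (s * (u + g * v))\<^sup>2 / 2"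
    by (simp add: power_divide algebra_simps)
  also have "\<dots> = s\<^sup>2 * (u\<^sup>2 + 2 * g * (u * v) + g\<^sup>2 * v\<^sup>2) / 2"
    by (simp add: power2_eq_square algebra_simps)
  also have "\<dots> = \<bar>a (e j)\<bar> / (2 * l1) + (\<bar>a (e j)\<bar> * g) * parity (e j) x / (2 * l1)"
    unfolding u2 v2 g2 uv s2 by (simp add: algebra_simps)
  finally show ?thesis unfolding u_def v_def g_def abs_mult_sgn .
qed

lemma accept_prob_eq:
  "accept_prob n ws x unitaries accepting = 1/2 + (\<Sum>S\<in>Pow {0..<n}. a S * parity S x) / (2 * l1)"
proof -
  have inj: "inj_on (\<lambda>j::nat. 2 * j) {0..<M}" by (rule inj_onI) simp
  have "accept_prob n ws x unitaries accepting = (\<Sum>r\<in>accepting. (cmod ((hadamard_b n ws *\<^sub>v state x k) $ r))\<^sup>2)"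
    using accepting_subset unfolding accept_prob_def Let_def qrun_unitaries[unfolded dim_def] dim_def
    by (simp add: Int_absorb2)
  also have "\<dots> = (\<Sum>j\<in>{0..<M}. \<bar>a (e j)\<bar> / (2 * l1) + a (e j) * parity (e j) x / (2 * l1))"
    unfolding accepting_def sum.reindex[OF inj] comp_def
    by (intro sum.cong refl) (simp only: final_amp norm_of_real power2_abs final_prob atLeastLessThan_iff)
  also have "\<dots> = (\<Sum>S\<in>Pow {0..<n}. \<bar>a S\<bar>) / (2 * l1) + (\<Sum>S\<in>Pow {0..<n}. a S * parity S x) / (2 * l1)"
    using sum_enum[of "\<lambda>S. \<bar>a S\<bar> / (2 * l1) + a S * parity S x / (2 * l1)"]
    by (simp add: atLeast0LessThan sum.distrib sum_divide_distrib)
  also have "(\<Sum>S\<in>Pow {0..<n}. \<bar>a S\<bar>) / (2 * l1) = 1/2" using l1_gt_0 unfolding l1_def by simp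
  finally show ?thesis .
qed

end

section \<open>Unbounded-error polynomials and quantum algorithms\<close>

lemma quantum_alg_computes_const:
  assumes n: "n \<ge> 1" and b: "\<forall>x\<in>X. f x = b"
  shows "quantum_alg_computes n X f 0 1 [1\<^sub>m (qdim n 1)] (if b then {0} else {})"
proof -
  have "qdim n 1 > 0" using n unfolding qdim_def by simp
  then have "accept_prob n 1 x [1\<^sub>m (qdim n 1)] (if b then {0} else {}) = bit b" for x
    unfolding accept_prob_def by (auto simp: bit_def)
  then show ?thesis unfolding quantum_alg_computes_def using b unitary_one by (auto simp: bit_def)
qed

lemma quantum_alg_of_unbounded_poly:
  assumes up: "unbounded_poly n X f c" and deg: "mpoly_deg_le n c (2 * k)"
    and X: "X \<noteq> {}" "X \<subseteq> cube n" and n: "n \<ge> 1" and k: "k \<ge> 1"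
  shows "\<exists>m Us Acc. quantum_alg_computes n X f k m Us Acc"
proof -
  have "cube_poly n (2 * k) (\<lambda>x. mpoly_eval n c x)" unfolding cube_poly_def using deg by blast
  then have "cube_poly n (2 * k) (\<lambda>x. mpoly_eval n c x + (- 1/2))"
    by (rule cube_poly_add[OF _ cube_poly_mono[OF cube_poly_const]]) simp
  then obtain a where deg_a: "mpoly_deg_le n a (2 * k)"
    and a: "\<forall>x\<in>cube n. mpoly_eval n c x + (- 1/2) = (\<Sum>S\<in>Pow {0..<n}. a S * parity S x)"
    using cube_poly_fourier by blast
  define p where "p x = (\<Sum>S\<in>Pow {0..<n}. a S * parity S x)" for x
  have sign: "x \<in> X \<Longrightarrow> (f x \<longrightarrow> p x > 0) \<and> (\<not> f x \<longrightarrow> p x < 0)" for x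
    using up a X(2) unfolding unbounded_poly_def p_def by force
  have pos: "0 < (\<Sum>S\<in>Pow {0..<n}. \<bar>a S\<bar>)"
  proof -
    obtain x where "x \<in> X" using X(1) by blast
    then have "p x \<noteq> 0" using sign by fastforce
    then show ?thesis unfolding p_def by (intro sum_abs_pos_if_sum_mult_nonzero) auto
  qed
  obtain e where e: "bij_betw e {0..<card (Pow {0..<n::nat})} (Pow {0..<n})"
    using ex_bij_betw_nat_finite[of "Pow {0..<n}"] by auto
  interpret A: fourier_alg n k a e "card (Pow {0..<n::nat})"
    by unfold_locales (use n k e deg_a pos in auto)
  have "quantum_alg_computes n X f k A.ws A.unitaries A.accepting"
    unfolding quantum_alg_computes_def
  proof (intro conjI A.ws_pos A.length_unitaries A.unitaries_unitary ballI impI)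
    fix x assume "x \<in> X"
    then show "f x \<Longrightarrow> 1/2 < accept_prob n A.ws x A.unitaries A.accepting"
      "\<not> f x \<Longrightarrow> 1/2 < 1 - accept_prob n A.ws x A.unitaries A.accepting"
      using sign A.l1_gt_0 unfolding A.accept_prob_eq p_def[symmetric]
      by (auto simp: divide_neg_pos)
  qed
  then show ?thesis by blast
qed

lemma mpoly_eval_deg_0:
  assumes "mpoly_deg_le n c 0"
  shows "mpoly_eval n c x = c {}"
proof -
  have "mpoly_eval n c x = mpoly_eval n (\<lambda>S. if S = {} then c {} else 0) x"
    unfolding mpoly_eval_def
  proof (intro sum.cong refl)
    fix S assume S: "S \<in> Pow {0..<n}"
    then have "finite S" using finite_subset by blast
    then show "c S * (\<Prod>i\<in>S. bit (x ! i)) = (if S = {} then c {} else 0) * (\<Prod>i\<in>S. bit (x ! i))"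
      using assms S unfolding mpoly_deg_le_def by (cases "S = {}") auto
  qed
  then show ?thesis by (simp add: mpoly_eval_single)
qed

lemma udeg_empty: "udeg n {} f = 0"
proof -
  have "unbounded_poly n {} f (\<lambda>S. if S = {} then 1/2 else 0) \<and> mpoly_deg_le n (\<lambda>S. if S = {} then 1/2 else 0) 0"
    by (auto simp: unbounded_poly_def mpoly_deg_le_def mpoly_eval_single)
  then show ?thesis unfolding udeg_def by (intro Least_eq_0) blast
qed

lemma unbounded_poly_udeg:
  assumes "X \<subseteq> cube n"
  shows "\<exists>c. unbounded_poly n X f c \<and> mpoly_deg_le n c (udeg n X f)"
  unfolding udeg_def
  by (rule LeastI_ex) (use unbounded_poly_of_rand_alg[OF rand_alg_computes_full_dtree[OF assms] assms] in blast)

lemma UC_eq_udeg: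
  assumes "X \<subseteq> cube n"
  shows "UC n X f = udeg n X f"
proof (rule antisym)
  obtain c where "unbounded_poly n X f c" "mpoly_deg_le n c (udeg n X f)"
    using unbounded_poly_udeg[OF assms] by blast
  then have "\<exists>P. rand_alg_computes n X f (udeg n X f) P" using rand_alg_of_unbounded_poly[OF _ _ assms] by blast
  then show "UC n X f \<le> udeg n X f" unfolding UC_def by (rule Least_le)
next
  have "\<exists>P. rand_alg_computes n X f (UC n X f) P"
    unfolding UC_def by (rule LeastI_ex) (use rand_alg_computes_full_dtree[OF assms] in blast)
  then have "\<exists>c. unbounded_poly n X f c \<and> mpoly_deg_le n c (UC n X f)"
    using unbounded_poly_of_rand_alg[OF _ assms] by blast
  then show "udeg n X f \<le> UC n X f" unfolding udeg_def by (rule Least_le)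
qed

lemma quantum_alg_udeg_half:
  assumes n: "n \<ge> 1" and X: "X \<subseteq> cube n"
  shows "\<exists>m Us Acc. quantum_alg_computes n X f ((udeg n X f + 1) div 2) m Us Acc"
proof -
  obtain c where up: "unbounded_poly n X f c" and deg: "mpoly_deg_le n c (udeg n X f)"
    using unbounded_poly_udeg[OF X] by blast
  show ?thesis
  proof (cases "udeg n X f = 0")
    case True
    have "\<forall>x\<in>X. f x = (c {} > 1/2)"
      using up mpoly_eval_deg_0[of n c] deg True unfolding unbounded_poly_def by auto
    then have "quantum_alg_computes n X f 0 1 [1\<^sub>m (qdim n 1)] (if c {} > 1/2 then {0} else {})"
      by (rule quantum_alg_computes_const[OF n])
    then show ?thesis unfolding True by auto
  next
    case False
    then have "X \<noteq> {}" using udeg_empty by auto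
    moreover have "udeg n X f \<le> 2 * ((udeg n X f + 1) div 2)" by presburger
    then have "mpoly_deg_le n c (2 * ((udeg n X f + 1) div 2))"
      using deg unfolding mpoly_deg_le_def by (meson order_trans)
    ultimately show ?thesis using quantum_alg_of_unbounded_poly[OF up _ _ X n] False by simp
  qed
qed

lemma UQ_eq_udeg_half:
  assumes n: "n \<ge> 1" and X: "X \<subseteq> cube n"
  shows "UQ n X f = (udeg n X f + 1) div 2"
proof -
  have "UQ n X f \<le> (udeg n X f + 1) div 2"
    unfolding UQ_def by (rule Least_le) (rule quantum_alg_udeg_half[OF n X])
  moreover have "\<exists>m Us Acc. quantum_alg_computes n X f (UQ n X f) m Us Acc"
    unfolding UQ_def by (rule LeastI_ex) (use quantum_alg_udeg_half[OF n X] in blast)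
  then obtain m Us Acc where "quantum_alg_computes n X f (UQ n X f) m Us Acc" by blast
  then have "udeg n X f \<le> 2 * UQ n X f"
    unfolding udeg_def by (intro Least_le) (rule unbounded_poly_of_quantum_alg[OF _ X n])
  ultimately show ?thesis by linarith
qed

lemma ceiling_half: "\<lceil>real d / 2\<rceil> = int ((d + 1) div 2)"
  by (rule ceiling_unique) (cases "even d"; auto elim!: evenE oddE simp: field_simps)+

theorem theorem2:
  fixes n :: nat and X :: "bool list set" and f :: "bool list \<Rightarrow> bool"
  assumes "n \<ge> 1" and "X \<subseteq> cube n"
  shows "real (UQ n X f) = of_int \<lceil>real (UC n X f) / 2\<rceil> \<and>
         real (UQ n X f) = of_int \<lceil>real (udeg n X f) / 2\<rceil>"
  using UC_eq_udeg[OF assms(2)] UQ_eq_udeg_half[OF assms] by (simp add: ceiling_half)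

end
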